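(* Let $\mathcal E$ be a nonlinear order preserving form on $L^2(\mu)$. For measurable $w\colon X\to[0,\infty]$ let $K(w)=\int_X w\,Gw\,d\mu$, $\tilde K(w)=\inf\{C>0: K(w/C)\le1\}$ and $\mu(w)=\sup\{\|fw\|_1/\|f\|_L: f\in M(\mathcal E)\}$ (the optimal constant in the Hardy inequality $\int_X|f|w\,d\mu\le C\|f\|_L$). Then $\tilde K(w)\le\mu(w)\le2\tilde K(w)$.
   Context: $(X,\mathfrak A,\mu)$ is $\sigma$-finite. A nonlinear order preserving form is a lower semicontinuous convex $\mathcal E\colon L^2(\mu)\to[0,\infty]$ with $\mathcal E(-f)=\mathcal E(f)$, $\mathcal E(0)=0$ and $\mathcal E(f+|g|)+\mathcal E(f-|g|)\le\mathcal E(f+g)+\mathcal E(f-g)$ for all $f,g$. $M(\mathcal E)=\{f:\lim_{\lambda\to0+}\mathcal E(\lambda f)=0\}$, $\|f\|_L=\inf\{\lambda>0:\mathcal E(\lambda^{-1}f)\le1\}$. Resolvent: $G_\alpha f$ is the unique minimizer of $g\mapsto\mathcal E(g)+\frac\alpha2\|g-\alpha^{-1}f\|_2^2$; it is extended to nonnegative measurable functions by monotone limits, and the Green operator is $Gf=\lim_{\alpha\to0+}G_\alpha f$. In $K(w)$ the convention $0\cdot\infty=0$ is used. *)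

theory Defs
  imports "HOL-Analysis.Analysis"
begin

text \<open>Square integrable (real valued, measurable) functions; L^2(mu) is represented
  by representatives, and all notions below are invariant under a.e. equality.\<close>
definition L2 :: "'a measure \<Rightarrow> ('a \<Rightarrow> real) set" where
  "L2 M = {f \<in> borel_measurable M. integrable M (\<lambda>x. (f x)^2)}"

definition nonlinear_order_preserving_form ::
  "'a measure \<Rightarrow> (('a \<Rightarrow> real) \<Rightarrow> ennreal) \<Rightarrow> bool" where
  "nonlinear_order_preserving_form M E \<longleftrightarrow>
     (\<forall>f\<in>L2 M. \<forall>g\<in>L2 M. (AE x in M. f x = g x) \<longrightarrow> E f = E g) \<and>
     (\<forall>f\<in>L2 M. \<forall>g\<in>L2 M. \<forall>t::real. 0 \<le> t \<and> t \<le> 1 \<longrightarrow>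
        E (\<lambda>x. t * f x + (1 - t) * g x) \<le> ennreal t * E f + ennreal (1 - t) * E g) \<and>
     (\<forall>F f. (\<forall>n. F n \<in> L2 M) \<and> f \<in> L2 M \<and>
        ((\<lambda>n. \<integral>x. (F n x - f x)^2 \<partial>M) \<longlonglongrightarrow> 0)
        \<longrightarrow> E f \<le> liminf (\<lambda>n. E (F n))) \<and>
     (\<forall>f\<in>L2 M. E (\<lambda>x. - f x) = E f) \<and>
     E (\<lambda>x. 0) = 0 \<and>
     (\<forall>f\<in>L2 M. \<forall>g\<in>L2 M.
        E (\<lambda>x. f x + \<bar>g x\<bar>) + E (\<lambda>x. f x - \<bar>g x\<bar>) \<le> E (\<lambda>x. f x + g x) + E (\<lambda>x. f x - g x))"

definition resolvent_L2 ::
  "'a measure \<Rightarrow> (('a \<Rightarrow> real) \<Rightarrow> ennreal) \<Rightarrow> real \<Rightarrow> ('a \<Rightarrow> real) \<Rightarrow> ('a \<Rightarrow> real)" where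
  "resolvent_L2 M E \<alpha> f = (SOME g. g \<in> L2 M \<and>
     (\<forall>h\<in>L2 M. E g + ennreal (\<alpha> / 2 * (\<integral>x. (g x - f x / \<alpha>)^2 \<partial>M))
               \<le> E h + ennreal (\<alpha> / 2 * (\<integral>x. (h x - f x / \<alpha>)^2 \<partial>M))))"

definition exhaust :: "'a measure \<Rightarrow> nat \<Rightarrow> 'a set" where
  "exhaust M = (SOME A. range A \<subseteq> sets M \<and> \<Union>(range A) = space M \<and>
                   (\<forall>i. emeasure M (A i) \<noteq> \<infinity>) \<and> incseq A)"

text \<open>Extension of the resolvent to nonnegative measurable functions by monotone limits
  along the increasing L^2 approximations min(f,n) * 1_{A_n}.\<close>
definition resolvent :: "'a measure \<Rightarrow> (('a \<Rightarrow> real) \<Rightarrow> ennreal) \<Rightarrow> real \<Rightarrow> ('a \<Rightarrow> ennreal) \<Rightarrow> 'a \<Rightarrow> ennreal" where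
  "resolvent M E \<alpha> f = (\<lambda>x. SUP n. ennreal (resolvent_L2 M E \<alpha>
      (\<lambda>y. enn2real (min (f y) (of_nat n)) * indicator (exhaust M n) y) x))"

text \<open>Green operator: G f = lim_{alpha -> 0+} G_alpha f (monotone in alpha), along alpha = 1/(n+1).\<close>
definition green :: "'a measure \<Rightarrow> (('a \<Rightarrow> real) \<Rightarrow> ennreal) \<Rightarrow> ('a \<Rightarrow> ennreal) \<Rightarrow> 'a \<Rightarrow> ennreal" where
  "green M E f = (\<lambda>x. SUP n. resolvent M E (1 / real (Suc n)) f x)"

definition Kfun :: "'a measure \<Rightarrow> (('a \<Rightarrow> real) \<Rightarrow> ennreal) \<Rightarrow> ('a \<Rightarrow> ennreal) \<Rightarrow> ennreal" where
  "Kfun M E w = (\<integral>\<^sup>+ x. w x * green M E w x \<partial>M)"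

definition Ktilde :: "'a measure \<Rightarrow> (('a \<Rightarrow> real) \<Rightarrow> ennreal) \<Rightarrow> ('a \<Rightarrow> ennreal) \<Rightarrow> ennreal" where
  "Ktilde M E w = (INF C \<in> {C::real. 0 < C \<and> Kfun M E (\<lambda>x. w x / ennreal C) \<le> 1}. ennreal C)"

definition Lnorm :: "'a measure \<Rightarrow> (('a \<Rightarrow> real) \<Rightarrow> ennreal) \<Rightarrow> ('a \<Rightarrow> real) \<Rightarrow> ennreal" where
  "Lnorm M E f = (INF l \<in> {l::real. 0 < l \<and> E (\<lambda>x. f x / l) \<le> 1}. ennreal l)"

definition ME :: "'a measure \<Rightarrow> (('a \<Rightarrow> real) \<Rightarrow> ennreal) \<Rightarrow> ('a \<Rightarrow> real) set" where
  "ME M E = {f \<in> L2 M. ((\<lambda>l::real. E (\<lambda>x. l * f x)) \<longlongrightarrow> 0) (at_right 0)}"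

text \<open>mu(w) = sup of norm(f w)_1 / norm(f)_L over f in M(E) (ennreal division: x/0 = infinity for x > 0).\<close>
definition hardy_const :: "'a measure \<Rightarrow> (('a \<Rightarrow> real) \<Rightarrow> ennreal) \<Rightarrow> ('a \<Rightarrow> ennreal) \<Rightarrow> ennreal" where
  "hardy_const M E w = (SUP f \<in> ME M E. (\<integral>\<^sup>+ x. ennreal \<bar>f x\<bar> * w x \<partial>M) / Lnorm M E f)"

end

theory Submission
  imports Defs
begin

(*
  The resolvent G_alpha f is the minimiser of  E g + alpha/2 ||g - f/alpha||^2  over L^2. This functional
  is strongly convex and lower semicontinuous, so minimising sequences converge in L^2. Comparing two
  minimisers g1, g2 with their pointwise min and max, the order preserving property shows that
  min g1 g2 is again a minimiser; hence G_alpha is monotone in f and antitone in alpha, and the Green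
  function G w is the supremum of the diagonal approximations G_(1/(j+1)) applied to truncations of w.

  mu(w) <= 2 Ktilde(w): the optimality condition for g = G_alpha v says that v - alpha g is a
  subgradient of E at g. With v a truncation of w this gives, as alpha -> 0, the Young type inequality
  int |h| w <= E(h) + K(w). Applied to h = f/l and w/C with E(f/l) <= 1 and K(w/C) <= 1 it bounds
  int |f| w by 2 C l.

  Ktilde(w) <= mu(w): let mu(w) < 1, 0 <= v <= w and g = G_alpha v. Then E(g) <= int v g =: k, so
  ||g||_L <= max 1 k, and the Hardy inequality gives k <= int |g| w <= mu(w) max 1 k. This forces
  k <= 1 and then int w g <= mu(w); taking suprema, K(w) <= mu(w). Scaling w by C > mu(w) yields
  K(w/C) <= 1.
*)

lemma square_dist_min_max_le:
  fixes a y1 y2 c1 c2 :: real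
  assumes "0 < a" and "c1 \<le> c2"
  shows "a/2 * (min y1 y2 - c1/a)\<^sup>2 + a/2 * (max y1 y2 - c2/a)\<^sup>2 \<le> a/2 * (y1 - c1/a)\<^sup>2 + a/2 * (y2 - c2/a)\<^sup>2"
proof (cases "y1 \<le> y2")
  case False
  have "a/2 * (y1 - c1/a)\<^sup>2 + a/2 * (y2 - c2/a)\<^sup>2 - (a/2 * (y2 - c1/a)\<^sup>2 + a/2 * (y1 - c2/a)\<^sup>2)
      = (y1 - y2) * (c2 - c1)"
    using \<open>0 < a\<close> by (simp add: power2_eq_square field_simps)
  moreover have "0 \<le> (y1 - y2) * (c2 - c1)" using False \<open>c1 \<le> c2\<close> by simp
  ultimately show ?thesis using False by simp
qed simp

lemma square_dist_min_max_le_param: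
  fixes a b y1 y2 c :: real
  assumes "0 < a" and "a \<le> b" and "0 \<le> y2"
  shows "b/2 * (min y1 y2 - c/b)\<^sup>2 + a/2 * (max y1 y2 - c/a)\<^sup>2 \<le> b/2 * (y1 - c/b)\<^sup>2 + a/2 * (y2 - c/a)\<^sup>2"
proof (cases "y1 \<le> y2")
  case False
  have "b/2 * (y1 - c/b)\<^sup>2 + a/2 * (y2 - c/a)\<^sup>2 - (b/2 * (y2 - c/b)\<^sup>2 + a/2 * (y1 - c/a)\<^sup>2)
      = (b - a)/2 * (y1\<^sup>2 - y2\<^sup>2)"
    using assms by (simp add: power2_eq_square field_simps)
  moreover have "y2\<^sup>2 \<le> y1\<^sup>2" using False \<open>0 \<le> y2\<close> by (intro power_mono) auto
  then have "0 \<le> (b - a)/2 * (y1\<^sup>2 - y2\<^sup>2)" using \<open>a \<le> b\<close> by simp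
  ultimately show ?thesis using False by simp
qed simp

lemma abs_square_diff_le:
  fixes a b t :: real
  assumes "0 < t"
  shows "\<bar>a\<^sup>2 - b\<^sup>2\<bar> \<le> (1 + 1/t) * (a - b)\<^sup>2 + t * b\<^sup>2"
proof -
  have "\<bar>a\<^sup>2 - b\<^sup>2\<bar> \<le> \<bar>(a - b)\<^sup>2\<bar> + \<bar>2 * b * (a - b)\<bar>"
    using abs_triangle_ineq[of "(a - b)\<^sup>2" "2 * b * (a - b)"]
    by (simp add: power2_eq_square algebra_simps)
  moreover have "t * \<bar>2 * b * (a - b)\<bar> \<le> (a - b)\<^sup>2 + t\<^sup>2 * b\<^sup>2"
    using zero_le_power2[of "t * b + (a - b)"] zero_le_power2[of "t * b - (a - b)"] \<open>0 < t\<close>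
    by (auto simp: abs_if power2_eq_square algebra_simps)
  then have "\<bar>2 * b * (a - b)\<bar> \<le> (a - b)\<^sup>2 / t + t * b\<^sup>2"
    using \<open>0 < t\<close> by (simp add: field_simps power2_eq_square)
  moreover have "(1 + 1/t) * (a - b)\<^sup>2 = (a - b)\<^sup>2 + (a - b)\<^sup>2 / t"
    by (simp add: distrib_right)
  ultimately show ?thesis
    by simp
qed

lemma le_of_forall_le_add_mult:
  fixes a b c :: real
  assumes "\<And>t. 0 < t \<Longrightarrow> t \<le> 1 \<Longrightarrow> a \<le> b + t * c"
  shows "a \<le> b"
proof (rule field_le_epsilon)
  fix e :: real assume "0 < e"
  define t where "t = min 1 (e / (\<bar>c\<bar> + 1))"
  have "0 < t" "t \<le> 1" using \<open>0 < e\<close> by (auto simp: t_def)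
  have "t * c \<le> e / (\<bar>c\<bar> + 1) * \<bar>c\<bar>"
    using \<open>0 < t\<close> by (intro order.trans[OF _ mult_right_mono[of t "e / (\<bar>c\<bar> + 1)"]])
      (auto simp: t_def abs_le_iff mult_le_cancel_left)
  also have "\<dots> \<le> e" using \<open>0 < e\<close> by (simp add: field_simps)
  finally show "a \<le> b + e" using assms[OF \<open>0 < t\<close> \<open>t \<le> 1\<close>] by linarith
qed

lemma Cauchy_if_dist_le_inverse_Suc:
  fixes d :: "nat \<Rightarrow> nat \<Rightarrow> real"
  assumes "0 < c" and bound: "\<And>n k. c * d n k \<le> 1 / Suc n + 1 / Suc k" and "0 < e"
  shows "\<exists>N. \<forall>n\<ge>N. \<forall>k\<ge>N. d n k < e"
proof -
  obtain N :: nat where N: "2 / (c * e) < N"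
    using reals_Archimedean2 by blast
  moreover have "0 < 2 / (c * e)"
    using \<open>0 < c\<close> \<open>0 < e\<close> by simp
  ultimately have "0 < real N"
    by linarith
  have "d n k < e" if "N \<le> n" "N \<le> k" for n k
  proof -
    have "1 / Suc n \<le> 1 / N" "1 / Suc k \<le> 1 / N"
      using that \<open>0 < real N\<close> by (auto intro!: divide_left_mono)
    then have "c * d n k \<le> 2 / N"
      using bound[of n k] by linarith
    also have "2 / N < c * e"
      using N \<open>0 < real N\<close> \<open>0 < c\<close> \<open>0 < e\<close> by (simp add: field_simps)
    finally show ?thesis
      using \<open>0 < c\<close> by simp
  qed
  then show ?thesis by blast
qed

lemma convergent_if_increments_geometric:
  fixes a :: "nat \<Rightarrow> real"
  assumes "\<And>k. 4^k * (a (Suc k) - a k)\<^sup>2 \<le> S"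
  shows "convergent a"
proof -
  have bound: "\<bar>a (Suc k) - a k\<bar> \<le> sqrt S * (1/2)^k" for k
  proof -
    have "(2::real)^k * 2^k = 4^k" by (simp add: power_mult_distrib[symmetric])
    then have "(2^k * \<bar>a (Suc k) - a k\<bar>)\<^sup>2 \<le> S"
      using assms[of k] by (simp add: power2_eq_square algebra_simps)
    then have "2^k * \<bar>a (Suc k) - a k\<bar> \<le> sqrt S" by (rule real_le_rsqrt)
    then show ?thesis by (simp add: field_simps power_one_over)
  qed
  have "summable (\<lambda>k. a (Suc k) - a k)"
    by (rule summable_comparison_test'[where g="\<lambda>k. sqrt S * (1/2)^k" and N=0])
      (auto intro!: summable_mult summable_geometric simp: bound)
  then have "convergent (\<lambda>n. a n - a 0)"
    by (simp add: summable_iff_convergent sum_lessThan_telescope)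
  then show ?thesis by (simp add: convergent_diff_const_right_iff)
qed

lemma ennreal_two_mult_half: "2 * ennreal (1/2) = 1"
  by (metis ennreal_1 ennreal_mult' ennreal_numeral nonzero_mult_div_cancel_left times_divide_eq_right
      zero_le_numeral zero_neq_numeral mult_1_right)

lemma le_mult_INF_ennreal:
  fixes c z :: ennreal
  assumes "c \<noteq> 0" "c \<noteq> \<infinity>" "\<And>x. x \<in> S \<Longrightarrow> z \<le> c * f x"
  shows "z \<le> c * (INF x\<in>S. f x)"
proof -
  have "z / c \<le> (INF x\<in>S. f x)"
    using assms by (intro INF_greatest divide_le_posI_ennreal) (auto simp: zero_less_iff_neq_zero)
  then have "c * (z / c) \<le> c * (INF x\<in>S. f x)"
    by (rule mult_left_mono) simp
  moreover have "c * (z / c) = z"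
    using assms(1,2) ennreal_mult_divide_eq[of c z] by (simp add: ennreal_times_divide mult.commute)
  ultimately show ?thesis by simp
qed

lemma divide_le_of_le_mult_ennreal:
  fixes x l c :: ennreal
  assumes "x \<le> c * l"
  shows "x / l \<le> c"
proof (cases "l = 0")
  case False
  then show ?thesis
    using assms by (intro divide_le_posI_ennreal) (auto simp: mult.commute zero_less_iff_neq_zero)
qed (use assms in simp)

lemma le_mult_of_divide_le_ennreal:
  fixes x l h :: ennreal
  assumes "x / l \<le> h" "l \<le> ennreal B" "0 < B"
  shows "x \<le> h * ennreal B"
proof (cases "l = 0")
  case True
  then show ?thesis
    using assms by (cases "x = 0") (auto simp: top_unique ennreal_mult_eq_top_iff)
next
  case False
  have "l \<noteq> \<infinity>" using assms(2) by (auto simp: top_unique)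
  then have "x = x / l * l"
    using False by (simp add: ennreal_divide_times ennreal_divide_self less_top)
  also have "\<dots> \<le> h * ennreal B"
    using assms by (intro mult_mono) auto
  finally show ?thesis .
qed

lemma ennreal_abs_mult_rescale:
  fixes a l C :: real
  assumes "0 < l" "0 < C"
  shows "ennreal \<bar>a\<bar> * w = ennreal (C * l) * (ennreal \<bar>a / l\<bar> * (w / ennreal C))"
proof -
  have "ennreal (C * l) * ennreal \<bar>a / l\<bar> = ennreal (\<bar>a\<bar> * C)"
    using assms by (subst ennreal_mult'[symmetric]) (auto simp: abs_divide)
  then have "ennreal (C * l) * (ennreal \<bar>a / l\<bar> * (w / ennreal C)) = ennreal (\<bar>a\<bar> * C) * (w / ennreal C)"
    by (simp only: mult.assoc[symmetric])
  also have "\<dots> = ennreal \<bar>a\<bar> * (ennreal C * w / ennreal C)"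
    by (simp add: ennreal_mult' ennreal_times_divide mult.assoc)
  also have "ennreal C * w / ennreal C = w"
    using assms ennreal_mult_divide_eq[of "ennreal C" w] by (simp add: mult.commute)
  finally show ?thesis ..
qed

section \<open>Square integrable functions\<close>

lemma L2_borel_measurable: "f \<in> L2 M \<Longrightarrow> f \<in> borel_measurable M"
  by (simp add: L2_def)

lemma L2_integrable_square: "f \<in> L2 M \<Longrightarrow> integrable M (\<lambda>x. (f x)\<^sup>2)"
  by (simp add: L2_def)

lemma L2I: "f \<in> borel_measurable M \<Longrightarrow> integrable M (\<lambda>x. (f x)\<^sup>2) \<Longrightarrow> f \<in> L2 M"
  by (simp add: L2_def)

lemma L2I_square_bound:
  assumes "f \<in> borel_measurable M" "integrable M g" "AE x in M. (f x)\<^sup>2 \<le> g x"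
  shows "f \<in> L2 M"
proof (rule L2I[OF assms(1)], rule Bochner_Integration.integrable_bound[OF assms(2)])
  show "(\<lambda>x. (f x)\<^sup>2) \<in> borel_measurable M" using assms(1) by measurable
  show "AE x in M. norm ((f x)\<^sup>2) \<le> norm (g x)" using assms(3) by eventually_elim auto
qed

lemma integrable_L2_mult:
  assumes f: "f \<in> L2 M" and g: "g \<in> L2 M"
  shows "integrable M (\<lambda>x. f x * g x)"
proof (rule Bochner_Integration.integrable_bound)
  show "integrable M (\<lambda>x. (f x)\<^sup>2 + (g x)\<^sup>2)"
    using f g by (auto simp: L2_integrable_square)
  show "(\<lambda>x. f x * g x) \<in> borel_measurable M"
    using L2_borel_measurable[OF f] L2_borel_measurable[OF g] by auto
  have "\<bar>a * b\<bar> \<le> a\<^sup>2 + b\<^sup>2" for a b :: real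
  proof -
    have "2 * \<bar>a\<bar> * \<bar>b\<bar> \<le> a\<^sup>2 + b\<^sup>2" "0 \<le> \<bar>a\<bar> * \<bar>b\<bar>"
      using sum_squares_bound[of "\<bar>a\<bar>" "\<bar>b\<bar>"] by simp_all
    then show ?thesis unfolding abs_mult by linarith
  qed
  then show "AE x in M. norm (f x * g x) \<le> norm ((f x)\<^sup>2 + (g x)\<^sup>2)"
    by auto
qed

lemma L2_add:
  assumes f: "f \<in> L2 M" and g: "g \<in> L2 M"
  shows "(\<lambda>x. f x + g x) \<in> L2 M"
proof (rule L2I_square_bound)
  show "(\<lambda>x. f x + g x) \<in> borel_measurable M"
    using L2_borel_measurable[OF f] L2_borel_measurable[OF g] by auto
  show "integrable M (\<lambda>x. 2 * (f x)\<^sup>2 + 2 * (g x)\<^sup>2)"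
    using f g by (auto simp: L2_integrable_square)
  have "(a + b)\<^sup>2 \<le> 2 * a\<^sup>2 + 2 * b\<^sup>2" for a b :: real
    using zero_le_power2[of "a - b"] by (simp add: power2_eq_square algebra_simps)
  then show "AE x in M. (f x + g x)\<^sup>2 \<le> 2 * (f x)\<^sup>2 + 2 * (g x)\<^sup>2"
    by auto
qed

lemma L2_cmult: "f \<in> L2 M \<Longrightarrow> (\<lambda>x. c * f x) \<in> L2 M"
  by (intro L2I) (auto dest: L2_borel_measurable L2_integrable_square simp: power_mult_distrib)

lemma L2_zero: "(\<lambda>x. 0) \<in> L2 M"
  by (intro L2I) auto

lemma L2_diff: "f \<in> L2 M \<Longrightarrow> g \<in> L2 M \<Longrightarrow> (\<lambda>x. f x - g x) \<in> L2 M"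
  using L2_add[of f M "\<lambda>x. -1 * g x"] L2_cmult[of g M "-1"] by simp

lemma L2_divide: "f \<in> L2 M \<Longrightarrow> (\<lambda>x. f x / c) \<in> L2 M"
  using L2_cmult[of f M "1 / c"] by simp

lemma L2_abs: "f \<in> L2 M \<Longrightarrow> (\<lambda>x. \<bar>f x\<bar>) \<in> L2 M"
  by (intro L2I) (auto dest: L2_borel_measurable L2_integrable_square)

lemma L2_max:
  assumes f: "f \<in> L2 M" and g: "g \<in> L2 M"
  shows "(\<lambda>x. max (f x) (g x)) \<in> L2 M"
proof (rule L2I_square_bound)
  show "(\<lambda>x. max (f x) (g x)) \<in> borel_measurable M"
    using L2_borel_measurable[OF f] L2_borel_measurable[OF g] by auto
  show "integrable M (\<lambda>x. (f x)\<^sup>2 + (g x)\<^sup>2)"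
    using f g by (auto simp: L2_integrable_square)
qed (simp add: max_def)

lemma L2_min:
  assumes f: "f \<in> L2 M" and g: "g \<in> L2 M"
  shows "(\<lambda>x. min (f x) (g x)) \<in> L2 M"
proof (rule L2I_square_bound)
  show "(\<lambda>x. min (f x) (g x)) \<in> borel_measurable M"
    using L2_borel_measurable[OF f] L2_borel_measurable[OF g] by auto
  show "integrable M (\<lambda>x. (f x)\<^sup>2 + (g x)\<^sup>2)"
    using f g by (auto simp: L2_integrable_square)
qed (simp add: min_def)

lemma AE_convergent_if_fast_L2_Cauchy:
  assumes s: "\<And>k. s k \<in> L2 M"
    and fast: "\<And>k. (\<integral>x. (s (Suc k) x - s k x)\<^sup>2 \<partial>M) \<le> (1/16)^k"
  shows "AE x in M. convergent (\<lambda>k. s k x)"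
proof -
  have [measurable]: "s k \<in> borel_measurable M" for k by (rule L2_borel_measurable[OF s])
  define G where "G x = (\<Sum>k. ennreal (4^k * (s (Suc k) x - s k x)\<^sup>2))" for x
  have "(\<integral>\<^sup>+x. G x \<partial>M) = (\<Sum>k. \<integral>\<^sup>+x. ennreal (4^k * (s (Suc k) x - s k x)\<^sup>2) \<partial>M)"
    unfolding G_def by (rule nn_integral_suminf) measurable
  also have "\<dots> \<le> (\<Sum>k. ennreal ((1/4)^k))"
  proof (rule suminf_le)
    fix k
    have "(\<integral>\<^sup>+x. ennreal (4^k * (s (Suc k) x - s k x)\<^sup>2) \<partial>M)
        = ennreal (4^k * (\<integral>x. (s (Suc k) x - s k x)\<^sup>2 \<partial>M))"
      using L2_integrable_square[OF L2_diff[OF s s]] by (subst nn_integral_eq_integral) auto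
    also have "\<dots> \<le> ennreal (4^k * (1/16)^k)"
      using fast[of k] by (intro ennreal_leI mult_left_mono) auto
    also have "(4::real)^k * (1/16)^k = (1/4)^k"
      by (simp add: power_mult_distrib[symmetric])
    finally show "(\<integral>\<^sup>+x. ennreal (4^k * (s (Suc k) x - s k x)\<^sup>2) \<partial>M) \<le> ennreal ((1/4)^k)" .
  qed auto
  also have "\<dots> = ennreal (\<Sum>k. (1/4)^k)"
    by (rule suminf_ennreal2) auto
  finally have "(\<integral>\<^sup>+x. G x \<partial>M) \<noteq> \<infinity>"
    by (auto simp: top_unique)
  then have "AE x in M. G x \<noteq> \<infinity>"
    by (intro nn_integral_noteq_infinite) (auto simp: G_def)
  then show ?thesis
  proof eventually_elim
    case (elim x)
    have "(\<Sum>i\<in>{k}. ennreal (4^i * (s (Suc i) x - s i x)\<^sup>2)) \<le> G x" for k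
      unfolding G_def by (rule sum_le_suminf) auto
    then have "ennreal (4^k * (s (Suc k) x - s k x)\<^sup>2) \<le> G x" for k
      by simp
    then have "enn2real (ennreal (4^k * (s (Suc k) x - s k x)\<^sup>2)) \<le> enn2real (G x)" for k
      using elim by (intro enn2real_mono) (auto simp: less_top)
    then have "4^k * (s (Suc k) x - s k x)\<^sup>2 \<le> enn2real (G x)" for k
      by simp
    then show ?case by (rule convergent_if_increments_geometric)
  qed
qed

lemma fast_subseq_if_Cauchy:
  fixes d :: "nat \<Rightarrow> nat \<Rightarrow> real" and \<epsilon> :: "nat \<Rightarrow> real"
  assumes Cauchy: "\<And>e. 0 < e \<Longrightarrow> \<exists>N. \<forall>n\<ge>N. \<forall>m\<ge>N. d n m < e" and "\<And>k. 0 < \<epsilon> k"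
  shows "\<exists>r. strict_mono r \<and> (\<forall>k i j. r k \<le> i \<longrightarrow> r k \<le> j \<longrightarrow> d i j < \<epsilon> k)"
proof -
  have "\<exists>r. \<forall>k. (\<forall>i\<ge>r k. \<forall>j\<ge>r k. d i j < \<epsilon> k) \<and> r k < r (Suc k)"
  proof (intro dependent_nat_choice)
    show "\<exists>N. \<forall>i\<ge>N. \<forall>j\<ge>N. d i j < \<epsilon> 0"
      using Cauchy \<open>0 < \<epsilon> 0\<close> by blast
    fix N k
    obtain N' where "\<forall>i\<ge>N'. \<forall>j\<ge>N'. d i j < \<epsilon> (Suc k)"
      using Cauchy \<open>0 < \<epsilon> (Suc k)\<close> by blast
    then show "\<exists>N''. (\<forall>i\<ge>N''. \<forall>j\<ge>N''. d i j < \<epsilon> (Suc k)) \<and> N < N''"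
      by (intro exI[of _ "max N' (Suc N)"]) auto
  qed
  then show ?thesis
    by (auto simp: strict_mono_Suc_iff)
qed

lemma nn_integral_square_diff_le_if_AE_subseq_limit:
  fixes r :: "nat \<Rightarrow> nat"
  assumes s: "\<And>n. s n \<in> L2 M" and "strict_mono r" and [measurable]: "g \<in> borel_measurable M"
    and lim: "AE x in M. (\<lambda>k. s (r k) x) \<longlonglongrightarrow> g x"
    and bound: "\<And>i j. n \<le> i \<Longrightarrow> n \<le> j \<Longrightarrow> (\<integral>x. (s i x - s j x)\<^sup>2 \<partial>M) < e"
  shows "(\<integral>\<^sup>+x. ennreal ((s n x - g x)\<^sup>2) \<partial>M) \<le> ennreal e"
proof -
  have [measurable]: "s n \<in> borel_measurable M" for n by (rule L2_borel_measurable[OF s])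
  have "(\<integral>\<^sup>+x. ennreal ((s n x - g x)\<^sup>2) \<partial>M)
      = (\<integral>\<^sup>+x. liminf (\<lambda>k. ennreal ((s n x - s (r k) x)\<^sup>2)) \<partial>M)"
    using lim
  proof (intro nn_integral_cong_AE, eventually_elim)
    case (elim x)
    then have "(\<lambda>k. ennreal ((s n x - s (r k) x)\<^sup>2)) \<longlonglongrightarrow> ennreal ((s n x - g x)\<^sup>2)"
      by (intro tendsto_ennrealI tendsto_intros)
    from lim_imp_Liminf[OF sequentially_bot this] show ?case by simp
  qed
  also have "\<dots> \<le> liminf (\<lambda>k. \<integral>\<^sup>+x. ennreal ((s n x - s (r k) x)\<^sup>2) \<partial>M)"
    by (rule nn_integral_liminf) measurable
  also have "\<dots> \<le> ennreal e"
  proof (intro Liminf_le eventually_sequentiallyI)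
    fix k assume "n \<le> k"
    then have "n \<le> r k" using seq_suble[OF \<open>strict_mono r\<close>, of k] by linarith
    have "(\<integral>\<^sup>+x. ennreal ((s n x - s (r k) x)\<^sup>2) \<partial>M) = ennreal (\<integral>x. (s n x - s (r k) x)\<^sup>2 \<partial>M)"
      using L2_integrable_square[OF L2_diff[OF s s]] by (intro nn_integral_eq_integral) auto
    also have "\<dots> \<le> ennreal e" using bound[of n "r k"] \<open>n \<le> r k\<close> by (intro ennreal_leI) auto
    finally show "(\<integral>\<^sup>+x. ennreal ((s n x - s (r k) x)\<^sup>2) \<partial>M) \<le> ennreal e" .
  qed auto
  finally show ?thesis .
qed

lemma L2_Cauchy_limit:
  assumes s: "\<And>n. s n \<in> L2 M"
    and Cauchy: "\<And>e. 0 < e \<Longrightarrow> \<exists>N. \<forall>n\<ge>N. \<forall>m\<ge>N. (\<integral>x. (s n x - s m x)\<^sup>2 \<partial>M) < e"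
  shows "\<exists>g\<in>L2 M. (\<lambda>n. \<integral>x. (s n x - g x)\<^sup>2 \<partial>M) \<longlonglongrightarrow> 0"
proof -
  have [measurable]: "s n \<in> borel_measurable M" for n by (rule L2_borel_measurable[OF s])
  obtain r where "strict_mono r"
    and r: "\<And>k i j. r k \<le> i \<Longrightarrow> r k \<le> j \<Longrightarrow> (\<integral>x. (s i x - s j x)\<^sup>2 \<partial>M) < (1/16)^k"
    using fast_subseq_if_Cauchy[OF Cauchy, of "\<lambda>k. (1/16)^k"] by auto
  have "AE x in M. convergent (\<lambda>k. s (r k) x)"
  proof (rule AE_convergent_if_fast_L2_Cauchy)
    show "s (r k) \<in> L2 M" for k by (rule s)
    show "(\<integral>x. (s (r (Suc k)) x - s (r k) x)\<^sup>2 \<partial>M) \<le> (1/16)^k" for k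
      using r[of k "r (Suc k)" "r k"] strict_monoD[OF \<open>strict_mono r\<close>, of k "Suc k"] by simp
  qed
  define g where "g x = lim (\<lambda>k. s (r k) x)" for x
  have [measurable]: "g \<in> borel_measurable M" unfolding g_def by measurable
  have lim: "AE x in M. (\<lambda>k. s (r k) x) \<longlonglongrightarrow> g x"
    using \<open>AE x in M. convergent (\<lambda>k. s (r k) x)\<close>
    by eventually_elim (simp add: g_def convergent_LIMSEQ_iff)
  note Fatou = nn_integral_square_diff_le_if_AE_subseq_limit[OF s \<open>strict_mono r\<close> _ lim]
  obtain N0 where "\<And>i j. N0 \<le> i \<Longrightarrow> N0 \<le> j \<Longrightarrow> (\<integral>x. (s i x - s j x)\<^sup>2 \<partial>M) < 1"
    using Cauchy[of 1] by auto
  then have "integrable M (\<lambda>x. (s N0 x - g x)\<^sup>2)"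
    using Fatou[of N0 1] by (intro integrableI_nonneg) (auto simp: less_top[symmetric] top_unique)
  then have "(\<lambda>x. s N0 x - (s N0 x - g x)) \<in> L2 M"
    by (intro L2_diff s L2I) auto
  then have g: "g \<in> L2 M" by simp
  have "(\<lambda>n. \<integral>x. (s n x - g x)\<^sup>2 \<partial>M) \<longlonglongrightarrow> 0"
  proof (rule LIMSEQ_I)
    fix e :: real assume "0 < e"
    then obtain N where N: "\<And>i j. N \<le> i \<Longrightarrow> N \<le> j \<Longrightarrow> (\<integral>x. (s i x - s j x)\<^sup>2 \<partial>M) < e/2"
      using Cauchy[of "e/2"] by auto
    have "norm ((\<integral>x. (s n x - g x)\<^sup>2 \<partial>M) - 0) < e" if "N \<le> n" for n
    proof -
      have "ennreal (\<integral>x. (s n x - g x)\<^sup>2 \<partial>M) = (\<integral>\<^sup>+x. ennreal ((s n x - g x)\<^sup>2) \<partial>M)"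
        using L2_integrable_square[OF L2_diff[OF s g]] by (intro nn_integral_eq_integral[symmetric]) auto
      also have "\<dots> \<le> ennreal (e/2)"
        using that by (intro Fatou N) auto
      finally have "(\<integral>x. (s n x - g x)\<^sup>2 \<partial>M) \<le> e/2"
        using \<open>0 < e\<close> by (simp add: ennreal_le_iff)
      moreover have "0 \<le> (\<integral>x. (s n x - g x)\<^sup>2 \<partial>M)" by simp
      ultimately show ?thesis using \<open>0 < e\<close> by simp
    qed
    then show "\<exists>N. \<forall>n\<ge>N. norm ((\<integral>x. (s n x - g x)\<^sup>2 \<partial>M) - 0) < e"
      by blast
  qed
  with g show ?thesis by blast
qed

lemma L2_integral_square_tendsto:
  assumes s: "\<And>n. s n \<in> L2 M" and g: "g \<in> L2 M" and u: "u \<in> L2 M"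
    and lim: "(\<lambda>n. \<integral>x. (s n x - g x)\<^sup>2 \<partial>M) \<longlonglongrightarrow> 0"
  shows "(\<lambda>n. \<integral>x. (s n x - u x)\<^sup>2 \<partial>M) \<longlonglongrightarrow> (\<integral>x. (g x - u x)\<^sup>2 \<partial>M)"
proof (rule LIMSEQ_I)
  fix e :: real assume "0 < e"
  define B where "B = (\<integral>x. (g x - u x)\<^sup>2 \<partial>M)"
  define t where "t = e / (2 * (B + 1))"
  have "0 \<le> B" unfolding B_def by simp
  then have "0 < t" "t * B < e / 2"
    using \<open>0 < e\<close> by (auto simp: t_def field_simps)
  have dist: "\<bar>(\<integral>x. (s n x - u x)\<^sup>2 \<partial>M) - B\<bar> \<le> (1 + 1/t) * (\<integral>x. (s n x - g x)\<^sup>2 \<partial>M) + t * B" for n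
  proof -
    have "\<bar>(\<integral>x. (s n x - u x)\<^sup>2 \<partial>M) - B\<bar> = \<bar>\<integral>x. (s n x - u x)\<^sup>2 - (g x - u x)\<^sup>2 \<partial>M\<bar>"
      unfolding B_def using s g u by (simp add: L2_integrable_square L2_diff)
    also have "\<dots> \<le> (\<integral>x. \<bar>(s n x - u x)\<^sup>2 - (g x - u x)\<^sup>2\<bar> \<partial>M)"
      by (rule integral_abs_bound)
    also have "\<dots> \<le> (\<integral>x. (1 + 1/t) * (s n x - g x)\<^sup>2 + t * (g x - u x)\<^sup>2 \<partial>M)"
      using abs_square_diff_le[OF \<open>0 < t\<close>, of "s n x - u x" "g x - u x" for x] s g u
      by (intro integral_mono) (auto simp: L2_integrable_square L2_diff)
    also have "\<dots> = (1 + 1/t) * (\<integral>x. (s n x - g x)\<^sup>2 \<partial>M) + t * B"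
      unfolding B_def using s g u by (simp add: L2_integrable_square L2_diff)
    finally show ?thesis .
  qed
  have "\<forall>\<^sub>F n in sequentially. (1 + 1/t) * (\<integral>x. (s n x - g x)\<^sup>2 \<partial>M) < e / 2"
    using \<open>0 < e\<close> by (intro order_tendstoD(2)[OF tendsto_mult_right_zero[OF lim]]) simp
  then obtain N where N: "\<And>n. N \<le> n \<Longrightarrow> (1 + 1/t) * (\<integral>x. (s n x - g x)\<^sup>2 \<partial>M) < e / 2"
    unfolding eventually_sequentially by blast
  have "norm ((\<integral>x. (s n x - u x)\<^sup>2 \<partial>M) - B) < e" if "N \<le> n" for n
    using dist[of n] N[OF that] \<open>t * B < e / 2\<close> unfolding real_norm_def by linarith
  then show "\<exists>N. \<forall>n\<ge>N. norm ((\<integral>x. (s n x - u x)\<^sup>2 \<partial>M) - B) < e"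
    by blast
qed

lemma ennreal_integral_mult_le_nn_integral_abs:
  assumes v: "v \<in> L2 M" and g: "g \<in> L2 M" and "\<And>x. 0 \<le> v x" and "\<And>x. ennreal (v x) \<le> w x"
  shows "ennreal (\<integral>x. v x * g x \<partial>M) \<le> (\<integral>\<^sup>+x. ennreal \<bar>g x\<bar> * w x \<partial>M)"
proof -
  have [measurable]: "g \<in> borel_measurable M" "v \<in> borel_measurable M"
    using g v by (simp_all add: L2_borel_measurable)
  have "ennreal (\<integral>x. v x * g x \<partial>M) \<le> ennreal (\<integral>x. v x * \<bar>g x\<bar> \<partial>M)"
    using assms by (intro ennreal_leI integral_mono integrable_L2_mult L2_abs mult_left_mono) auto
  also have "\<dots> = (\<integral>\<^sup>+x. ennreal \<bar>g x\<bar> * ennreal (v x) \<partial>M)"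
    using assms
    by (subst nn_integral_eq_integral[symmetric]) (auto intro!: integrable_L2_mult L2_abs nn_integral_cong simp: ennreal_mult' mult.commute)
  also have "\<dots> \<le> (\<integral>\<^sup>+x. ennreal \<bar>g x\<bar> * w x \<partial>M)"
    using assms by (intro nn_integral_mono mult_left_mono) simp_all
  finally show ?thesis .
qed

section \<open>Resolvents as minimisers\<close>

definition resolvent_penalty :: "'a measure \<Rightarrow> real \<Rightarrow> ('a \<Rightarrow> real) \<Rightarrow> ('a \<Rightarrow> real) \<Rightarrow> real" where
  "resolvent_penalty M \<alpha> f g = \<alpha> / 2 * (\<integral>x. (g x - f x / \<alpha>)\<^sup>2 \<partial>M)"

lemma resolvent_penalty_nonneg: "0 \<le> \<alpha> \<Longrightarrow> 0 \<le> resolvent_penalty M \<alpha> f g"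
  by (simp add: resolvent_penalty_def)

lemma resolvent_penalty_tendsto:
  assumes "\<And>n. s n \<in> L2 M" "g \<in> L2 M" "f \<in> L2 M"
    and "(\<lambda>n. \<integral>x. (s n x - g x)\<^sup>2 \<partial>M) \<longlonglongrightarrow> 0"
  shows "(\<lambda>n. resolvent_penalty M \<alpha> f (s n)) \<longlonglongrightarrow> resolvent_penalty M \<alpha> f g"
  unfolding resolvent_penalty_def
  by (intro tendsto_mult_left L2_integral_square_tendsto assms L2_divide)

lemma resolvent_penalty_midpoint:
  assumes f: "f \<in> L2 M" and g: "g \<in> L2 M" and h: "h \<in> L2 M"
  shows "2 * resolvent_penalty M \<alpha> f (\<lambda>x. (g x + h x) / 2) + \<alpha> / 4 * (\<integral>x. (g x - h x)\<^sup>2 \<partial>M)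
    = resolvent_penalty M \<alpha> f g + resolvent_penalty M \<alpha> f h"
proof -
  have pointwise: "((a + b) / 2 - c)\<^sup>2 + (a - b)\<^sup>2 / 4 = ((a - c)\<^sup>2 + (b - c)\<^sup>2) / 2" for a b c :: real
    by (simp add: power2_eq_square field_simps)
  have "integrable M (\<lambda>x. ((g x + h x) / 2 - f x / \<alpha>)\<^sup>2)" "integrable M (\<lambda>x. (g x - h x)\<^sup>2)"
    "integrable M (\<lambda>x. (g x - f x / \<alpha>)\<^sup>2)" "integrable M (\<lambda>x. (h x - f x / \<alpha>)\<^sup>2)"
    using f g h by (auto intro!: L2_integrable_square L2_diff L2_divide L2_add)
  then have "(\<integral>x. ((g x + h x) / 2 - f x / \<alpha>)\<^sup>2 \<partial>M) + (\<integral>x. (g x - h x)\<^sup>2 \<partial>M) / 4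
      = (\<integral>x. ((g x + h x) / 2 - f x / \<alpha>)\<^sup>2 + (g x - h x)\<^sup>2 / 4 \<partial>M)"
    by simp
  also have "\<dots> = (\<integral>x. ((g x - f x / \<alpha>)\<^sup>2 + (h x - f x / \<alpha>)\<^sup>2) / 2 \<partial>M)"
    by (simp only: pointwise)
  also have "\<dots> = ((\<integral>x. (g x - f x / \<alpha>)\<^sup>2 \<partial>M) + (\<integral>x. (h x - f x / \<alpha>)\<^sup>2 \<partial>M)) / 2"
    using \<open>integrable M (\<lambda>x. (g x - f x / \<alpha>)\<^sup>2)\<close> \<open>integrable M (\<lambda>x. (h x - f x / \<alpha>)\<^sup>2)\<close> by simp
  finally have "(\<integral>x. ((g x + h x) / 2 - f x / \<alpha>)\<^sup>2 \<partial>M) + (\<integral>x. (g x - h x)\<^sup>2 \<partial>M) / 4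
      = ((\<integral>x. (g x - f x / \<alpha>)\<^sup>2 \<partial>M) + (\<integral>x. (h x - f x / \<alpha>)\<^sup>2 \<partial>M)) / 2" .
  moreover have "A + I / 4 = (G + H) / 2 \<Longrightarrow> 2 * (\<alpha> / 2 * A) + \<alpha> / 4 * I = \<alpha> / 2 * G + \<alpha> / 2 * H"
    for A I G H :: real
    by (drule arg_cong[where f="\<lambda>y. \<alpha> * y"]) (simp add: field_simps)
  ultimately show ?thesis
    unfolding resolvent_penalty_def by blast
qed

lemma resolvent_penalty_segment:
  assumes f: "f \<in> L2 M" and g: "g \<in> L2 M" and h: "h \<in> L2 M" and "\<alpha> \<noteq> 0"
  shows "resolvent_penalty M \<alpha> f (\<lambda>x. t * h x + (1 - t) * g x) = resolvent_penalty M \<alpha> f g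
    - t * (\<integral>x. (f x - \<alpha> * g x) * (h x - g x) \<partial>M) + t\<^sup>2 * (\<alpha> / 2 * (\<integral>x. (h x - g x)\<^sup>2 \<partial>M))"
proof -
  have pointwise: "\<alpha> / 2 * (t * h x + (1 - t) * g x - f x / \<alpha>)\<^sup>2 = \<alpha> / 2 * (g x - f x / \<alpha>)\<^sup>2
      - t * ((f x - \<alpha> * g x) * (h x - g x)) + t\<^sup>2 * (\<alpha> / 2 * (h x - g x)\<^sup>2)" for x
    using \<open>\<alpha> \<noteq> 0\<close> by (simp add: power2_eq_square field_simps)
  have "integrable M (\<lambda>x. (g x - f x / \<alpha>)\<^sup>2)" "integrable M (\<lambda>x. (h x - g x)\<^sup>2)"
    "integrable M (\<lambda>x. (f x - \<alpha> * g x) * (h x - g x))"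
    using f g h by (auto intro!: L2_integrable_square integrable_L2_mult L2_diff L2_divide L2_cmult)
  then have "(\<integral>x. \<alpha> / 2 * (t * h x + (1 - t) * g x - f x / \<alpha>)\<^sup>2 \<partial>M) = \<alpha> / 2 * (\<integral>x. (g x - f x / \<alpha>)\<^sup>2 \<partial>M)
      - t * (\<integral>x. (f x - \<alpha> * g x) * (h x - g x) \<partial>M) + t\<^sup>2 * (\<alpha> / 2 * (\<integral>x. (h x - g x)\<^sup>2 \<partial>M))"
    unfolding pointwise by simp
  then show ?thesis
    unfolding resolvent_penalty_def by simp
qed

lemma resolvent_penalty_expand:
  assumes f: "f \<in> L2 M" and g: "g \<in> L2 M" and "\<alpha> \<noteq> 0"
  shows "resolvent_penalty M \<alpha> f g
    = resolvent_penalty M \<alpha> f (\<lambda>x. 0) + \<alpha> / 2 * (\<integral>x. (g x)\<^sup>2 \<partial>M) - (\<integral>x. f x * g x \<partial>M)"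
proof -
  have pointwise: "\<alpha> / 2 * (g x - f x / \<alpha>)\<^sup>2 = \<alpha> / 2 * (f x / \<alpha>)\<^sup>2 + \<alpha> / 2 * (g x)\<^sup>2 - f x * g x" for x
    using \<open>\<alpha> \<noteq> 0\<close> by (simp add: power2_eq_square field_simps)
  have "integrable M (\<lambda>x. (f x / \<alpha>)\<^sup>2)" "integrable M (\<lambda>x. (g x)\<^sup>2)" "integrable M (\<lambda>x. f x * g x)"
    using f g by (auto intro!: L2_integrable_square integrable_L2_mult L2_divide)
  then have "(\<integral>x. \<alpha> / 2 * (g x - f x / \<alpha>)\<^sup>2 \<partial>M)
      = \<alpha> / 2 * (\<integral>x. (f x / \<alpha>)\<^sup>2 \<partial>M) + \<alpha> / 2 * (\<integral>x. (g x)\<^sup>2 \<partial>M) - (\<integral>x. f x * g x \<partial>M)"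
    unfolding pointwise by simp
  then show ?thesis
    unfolding resolvent_penalty_def by simp
qed

definition resolvent_functional ::
  "'a measure \<Rightarrow> (('a \<Rightarrow> real) \<Rightarrow> ennreal) \<Rightarrow> real \<Rightarrow> ('a \<Rightarrow> real) \<Rightarrow> ('a \<Rightarrow> real) \<Rightarrow> ennreal" where
  "resolvent_functional M E \<alpha> f g = E g + ennreal (resolvent_penalty M \<alpha> f g)"

definition is_resolvent ::
  "'a measure \<Rightarrow> (('a \<Rightarrow> real) \<Rightarrow> ennreal) \<Rightarrow> real \<Rightarrow> ('a \<Rightarrow> real) \<Rightarrow> ('a \<Rightarrow> real) \<Rightarrow> bool" where
  "is_resolvent M E \<alpha> f g \<longleftrightarrow>
     g \<in> L2 M \<and> (\<forall>h\<in>L2 M. resolvent_functional M E \<alpha> f g \<le> resolvent_functional M E \<alpha> f h)"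

lemma resolvent_L2_eq_Eps: "resolvent_L2 M E \<alpha> f = (SOME g. is_resolvent M E \<alpha> f g)"
  unfolding resolvent_L2_def is_resolvent_def resolvent_functional_def resolvent_penalty_def ..

lemma is_resolventD:
  "is_resolvent M E \<alpha> f g \<Longrightarrow> g \<in> L2 M"
  "is_resolvent M E \<alpha> f g \<Longrightarrow> h \<in> L2 M \<Longrightarrow> resolvent_functional M E \<alpha> f g \<le> resolvent_functional M E \<alpha> f h"
  by (simp_all add: is_resolvent_def)

context
  fixes M :: "'a measure" and E :: "('a \<Rightarrow> real) \<Rightarrow> ennreal"
  assumes form: "nonlinear_order_preserving_form M E"
begin

lemma E_convex:
  "f \<in> L2 M \<Longrightarrow> g \<in> L2 M \<Longrightarrow> 0 \<le> t \<Longrightarrow> t \<le> 1 \<Longrightarrow>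
    E (\<lambda>x. t * f x + (1 - t) * g x) \<le> ennreal t * E f + ennreal (1 - t) * E g"
  using form unfolding nonlinear_order_preserving_form_def by blast

lemma E_lsc:
  "(\<And>n. s n \<in> L2 M) \<Longrightarrow> f \<in> L2 M \<Longrightarrow> (\<lambda>n. \<integral>x. (s n x - f x)\<^sup>2 \<partial>M) \<longlonglongrightarrow> 0 \<Longrightarrow>
    E f \<le> liminf (\<lambda>n. E (s n))"
  using form unfolding nonlinear_order_preserving_form_def by blast

lemma E_uminus: "f \<in> L2 M \<Longrightarrow> E (\<lambda>x. - f x) = E f"
  using form unfolding nonlinear_order_preserving_form_def by blast

lemma E_zero: "E (\<lambda>x. 0) = 0"
  using form unfolding nonlinear_order_preserving_form_def by blast

lemma E_order:
  "f \<in> L2 M \<Longrightarrow> g \<in> L2 M \<Longrightarrow>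
    E (\<lambda>x. f x + \<bar>g x\<bar>) + E (\<lambda>x. f x - \<bar>g x\<bar>) \<le> E (\<lambda>x. f x + g x) + E (\<lambda>x. f x - g x)"
  using form unfolding nonlinear_order_preserving_form_def by blast

lemma E_abs:
  assumes g: "g \<in> L2 M"
  shows "E (\<lambda>x. \<bar>g x\<bar>) \<le> E g"
proof -
  have "2 * E (\<lambda>x. \<bar>g x\<bar>) \<le> 2 * E g"
    using E_order[OF L2_zero g] E_uminus[OF g] E_uminus[OF L2_abs[OF g]] by (simp add: mult_2)
  then show ?thesis by (simp add: ennreal_mult_le_mult_iff)
qed

lemma E_cmult_le:
  assumes "g \<in> L2 M" "0 \<le> t" "t \<le> 1"
  shows "E (\<lambda>x. t * g x) \<le> ennreal t * E g"
  using E_convex[OF assms(1) L2_zero assms(2,3)] by (simp add: E_zero)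

lemma E_max_min_le:
  assumes g: "g \<in> L2 M" and h: "h \<in> L2 M"
  shows "E (\<lambda>x. max (g x) (h x)) + E (\<lambda>x. min (g x) (h x)) \<le> E g + E h"
proof -
  define u where "u x = (g x + h x) / 2" for x
  define v where "v x = (g x - h x) / 2" for x
  have "(\<lambda>x. u x + \<bar>v x\<bar>) = (\<lambda>x. max (g x) (h x))" "(\<lambda>x. u x - \<bar>v x\<bar>) = (\<lambda>x. min (g x) (h x))"
    "(\<lambda>x. u x + v x) = g" "(\<lambda>x. u x - v x) = h"
    by (auto simp: u_def v_def max_def min_def abs_if field_simps)
  moreover have "u \<in> L2 M" "v \<in> L2 M"
    unfolding u_def v_def using g h by (auto intro!: L2_divide L2_add L2_diff)
  ultimately show ?thesis
    using E_order[of u v] by simp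
qed

lemma E_midpoint_le:
  assumes g: "g \<in> L2 M" and h: "h \<in> L2 M"
  shows "2 * E (\<lambda>x. (g x + h x) / 2) \<le> E g + E h"
proof -
  have "(\<lambda>x. (g x + h x) / 2) = (\<lambda>x. 1/2 * g x + (1 - 1/2) * h x)"
    by (auto simp: field_simps)
  then have "E (\<lambda>x. (g x + h x) / 2) \<le> ennreal (1/2) * (E g + E h)"
    using E_convex[OF g h, of "1/2"] by (simp add: distrib_left)
  then have "2 * E (\<lambda>x. (g x + h x) / 2) \<le> 2 * (ennreal (1/2) * (E g + E h))"
    by (rule mult_left_mono) simp
  also have "\<dots> = E g + E h"
    unfolding mult.assoc[symmetric] ennreal_two_mult_half by simp
  finally show ?thesis .
qed

lemma resolvent_functional_zero:
  "resolvent_functional M E \<alpha> f (\<lambda>x. 0) = ennreal (resolvent_penalty M \<alpha> f (\<lambda>x. 0))"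
  by (simp add: resolvent_functional_def E_zero)

lemma is_resolvent_finite:
  assumes "is_resolvent M E \<alpha> f g"
  shows "resolvent_functional M E \<alpha> f g < \<infinity>" "E g < \<infinity>"
proof -
  have "resolvent_functional M E \<alpha> f g \<le> ennreal (resolvent_penalty M \<alpha> f (\<lambda>x. 0))"
    using is_resolventD(2)[OF assms L2_zero] by (simp add: resolvent_functional_zero)
  then show "resolvent_functional M E \<alpha> f g < \<infinity>"
    by (simp add: le_less_trans)
  then show "E g < \<infinity>"
    by (simp add: resolvent_functional_def)
qed

lemma resolvent_functional_midpoint:
  assumes f: "f \<in> L2 M" and g: "g \<in> L2 M" and h: "h \<in> L2 M" and "0 \<le> \<alpha>"
  shows "2 * resolvent_functional M E \<alpha> f (\<lambda>x. (g x + h x) / 2) + ennreal (\<alpha> / 4 * (\<integral>x. (g x - h x)\<^sup>2 \<partial>M))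
    \<le> resolvent_functional M E \<alpha> f g + resolvent_functional M E \<alpha> f h"
proof -
  let ?P = "resolvent_penalty M \<alpha> f"
  note E_mid = E_midpoint_le[OF g h]
  have "2 * ennreal (?P (\<lambda>x. (g x + h x) / 2)) + ennreal (\<alpha> / 4 * (\<integral>x. (g x - h x)\<^sup>2 \<partial>M))
      = ennreal (2 * ?P (\<lambda>x. (g x + h x) / 2) + \<alpha> / 4 * (\<integral>x. (g x - h x)\<^sup>2 \<partial>M))"
    using resolvent_penalty_nonneg[OF \<open>0 \<le> \<alpha>\<close>] \<open>0 \<le> \<alpha>\<close> by (subst ennreal_plus) (auto simp: ennreal_mult')
  also have "\<dots> = ennreal (?P g) + ennreal (?P h)"
    unfolding resolvent_penalty_midpoint[OF f g h]
    by (intro ennreal_plus resolvent_penalty_nonneg \<open>0 \<le> \<alpha>\<close>)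
  finally have P_mid: "2 * ennreal (?P (\<lambda>x. (g x + h x) / 2)) + ennreal (\<alpha> / 4 * (\<integral>x. (g x - h x)\<^sup>2 \<partial>M))
      = ennreal (?P g) + ennreal (?P h)" .
  have "2 * resolvent_functional M E \<alpha> f (\<lambda>x. (g x + h x) / 2) + ennreal (\<alpha> / 4 * (\<integral>x. (g x - h x)\<^sup>2 \<partial>M))
      = 2 * E (\<lambda>x. (g x + h x) / 2)
        + (2 * ennreal (?P (\<lambda>x. (g x + h x) / 2)) + ennreal (\<alpha> / 4 * (\<integral>x. (g x - h x)\<^sup>2 \<partial>M)))"
    by (simp add: resolvent_functional_def distrib_left add.assoc)
  also have "\<dots> \<le> (E g + E h) + (ennreal (?P g) + ennreal (?P h))"
    unfolding P_mid by (rule add_mono[OF E_mid order_refl])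
  also have "\<dots> = resolvent_functional M E \<alpha> f g + resolvent_functional M E \<alpha> f h"
    by (simp add: resolvent_functional_def add_ac)
  finally show ?thesis .
qed

lemma resolvent_functional_le_limit:
  assumes f: "f \<in> L2 M" and s: "\<And>n. s n \<in> L2 M" and g: "g \<in> L2 M"
    and conv: "(\<lambda>n. \<integral>x. (s n x - g x)\<^sup>2 \<partial>M) \<longlonglongrightarrow> 0"
    and lim: "(\<lambda>n. resolvent_functional M E \<alpha> f (s n)) \<longlonglongrightarrow> L" and "L \<noteq> \<infinity>"
  shows "resolvent_functional M E \<alpha> f g \<le> L"
proof -
  let ?P = "resolvent_penalty M \<alpha> f"
  have P_lim: "(\<lambda>n. ennreal (?P (s n))) \<longlonglongrightarrow> ennreal (?P g)"
    by (intro tendsto_ennrealI resolvent_penalty_tendsto s g f conv)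
  have "(\<lambda>n. resolvent_functional M E \<alpha> f (s n) - ennreal (?P (s n))) \<longlonglongrightarrow> L - ennreal (?P g)"
    using \<open>L \<noteq> \<infinity>\<close> by (intro tendsto_diff_ennreal lim P_lim) auto
  then have E_lim: "(\<lambda>n. E (s n)) \<longlonglongrightarrow> L - ennreal (?P g)"
    by (simp add: resolvent_functional_def)
  have "ennreal (?P g) \<le> L"
    by (rule tendsto_le[OF sequentially_bot lim P_lim]) (simp add: resolvent_functional_def)
  have "E g \<le> L - ennreal (?P g)"
    using E_lsc[OF s g conv] lim_imp_Liminf[OF sequentially_bot E_lim] by simp
  then have "E g + ennreal (?P g) \<le> L - ennreal (?P g) + ennreal (?P g)"
    by (rule add_right_mono)
  also have "\<dots> = L"
    using \<open>ennreal (?P g) \<le> L\<close> by (rule diff_add_cancel_ennreal)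
  finally show ?thesis
    unfolding resolvent_functional_def .
qed

lemma resolvent_functional_near_min_dist:
  assumes f: "f \<in> L2 M" and "0 < \<alpha>" and "0 \<le> mr"
    and min: "\<And>u. u \<in> L2 M \<Longrightarrow> ennreal mr \<le> resolvent_functional M E \<alpha> f u"
    and g: "g \<in> L2 M" "resolvent_functional M E \<alpha> f g \<le> ennreal (mr + a)" "0 \<le> a"
    and h: "h \<in> L2 M" "resolvent_functional M E \<alpha> f h \<le> ennreal (mr + b)" "0 \<le> b"
  shows "\<alpha> / 4 * (\<integral>x. (g x - h x)\<^sup>2 \<partial>M) \<le> a + b"
proof -
  let ?\<Phi> = "resolvent_functional M E \<alpha> f" and ?I = "\<integral>x. (g x - h x)\<^sup>2 \<partial>M"
  have "ennreal (2 * mr + \<alpha> / 4 * ?I) = 2 * ennreal mr + ennreal (\<alpha> / 4 * ?I)"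
    using \<open>0 < \<alpha>\<close> \<open>0 \<le> mr\<close> by (simp add: ennreal_plus ennreal_mult')
  also have "\<dots> \<le> 2 * ?\<Phi> (\<lambda>x. (g x + h x) / 2) + ennreal (\<alpha> / 4 * ?I)"
    using g h by (intro add_right_mono mult_left_mono min L2_divide L2_add) auto
  also have "\<dots> \<le> ?\<Phi> g + ?\<Phi> h"
    using \<open>0 < \<alpha>\<close> by (intro resolvent_functional_midpoint[OF f g(1) h(1)]) simp
  also have "\<dots> \<le> ennreal (mr + a) + ennreal (mr + b)"
    by (intro add_mono g h)
  also have "\<dots> = ennreal (2 * mr + (a + b))"
    using \<open>0 \<le> mr\<close> g h by (simp add: ennreal_plus[symmetric] del: ennreal_plus)
  finally show ?thesis
    using \<open>0 \<le> mr\<close> g h by (subst (asm) ennreal_le_iff) (auto intro: add_nonneg_nonneg)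
qed

lemma is_resolvent_exists:
  assumes f: "f \<in> L2 M" and "0 < \<alpha>"
  shows "\<exists>g. is_resolvent M E \<alpha> f g"
proof -
  let ?\<Phi> = "resolvent_functional M E \<alpha> f"
  define m where "m = (INF h\<in>L2 M. ?\<Phi> h)"
  have m_le: "m \<le> ?\<Phi> h" if "h \<in> L2 M" for h
    unfolding m_def using that by (rule INF_lower)
  have "m \<le> ennreal (resolvent_penalty M \<alpha> f (\<lambda>x. 0))"
    using m_le[OF L2_zero] by (simp add: resolvent_functional_zero)
  then obtain mr where mr: "m = ennreal mr" "0 \<le> mr"
    by (cases m) (auto simp: top_unique)
  have "\<exists>h\<in>L2 M. ?\<Phi> h < ennreal (mr + 1 / Suc n)" for n
  proof -
    have "m < ennreal (mr + 1 / Suc n)"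
      unfolding mr using \<open>0 \<le> mr\<close> by (intro ennreal_lessI) (auto intro: add_nonneg_pos)
    then show ?thesis unfolding m_def INF_less_iff .
  qed
  then obtain s where s: "\<And>n. s n \<in> L2 M" and s_less: "\<And>n. ?\<Phi> (s n) < ennreal (mr + 1 / Suc n)"
    by metis
  have "\<alpha> / 4 * (\<integral>x. (s n x - s k x)\<^sup>2 \<partial>M) \<le> 1 / Suc n + 1 / Suc k" for n k
    using m_le s_less unfolding mr
    by (intro resolvent_functional_near_min_dist[OF f \<open>0 < \<alpha>\<close> \<open>0 \<le> mr\<close> _ s _ _ s]) (auto intro: less_imp_le)
  then have "\<exists>N. \<forall>n\<ge>N. \<forall>k\<ge>N. (\<integral>x. (s n x - s k x)\<^sup>2 \<partial>M) < e" if "0 < e" for e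
    using \<open>0 < \<alpha>\<close> that by (intro Cauchy_if_dist_le_inverse_Suc[of "\<alpha> / 4"]) auto
  from L2_Cauchy_limit[OF s this] obtain g where g: "g \<in> L2 M"
    and conv: "(\<lambda>n. \<integral>x. (s n x - g x)\<^sup>2 \<partial>M) \<longlonglongrightarrow> 0"
    by blast
  have "(\<lambda>n. ?\<Phi> (s n)) \<longlonglongrightarrow> m"
  proof (rule tendsto_sandwich[of "\<lambda>n. m" _ _ "\<lambda>n. ennreal (mr + 1 / Suc n)"])
    show "\<forall>\<^sub>F n in sequentially. m \<le> ?\<Phi> (s n)" using m_le[OF s] by simp
    show "\<forall>\<^sub>F n in sequentially. ?\<Phi> (s n) \<le> ennreal (mr + 1 / Suc n)" using s_less by (simp add: less_imp_le)
    have "(\<lambda>n. ennreal (mr + 1 / Suc n)) \<longlonglongrightarrow> ennreal (mr + 0)"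
      by (intro tendsto_ennrealI tendsto_add tendsto_const LIMSEQ_inverse_real_of_nat[simplified inverse_eq_divide])
    then show "(\<lambda>n. ennreal (mr + 1 / Suc n)) \<longlonglongrightarrow> m" by (simp add: mr)
  qed simp
  then have "?\<Phi> g \<le> m"
    by (rule resolvent_functional_le_limit[OF f s g conv]) (simp add: mr)
  then have "is_resolvent M E \<alpha> f g"
    unfolding is_resolvent_def using g m_le order_trans by blast
  then show ?thesis by blast
qed

lemma is_resolvent_unique:
  assumes g: "is_resolvent M E \<alpha> f g" and g': "is_resolvent M E \<alpha> f g'" and f: "f \<in> L2 M" and "0 < \<alpha>"
  shows "AE x in M. g x = g' x"
proof -
  let ?\<Phi> = "resolvent_functional M E \<alpha> f"
  let ?I = "\<integral>x. (g x - g' x)\<^sup>2 \<partial>M"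
  have L2: "g \<in> L2 M" "g' \<in> L2 M" using g g' by (simp_all add: is_resolventD)
  have "2 * ?\<Phi> g + ennreal (\<alpha> / 4 * ?I) \<le> 2 * ?\<Phi> (\<lambda>x. (g x + g' x) / 2) + ennreal (\<alpha> / 4 * ?I)"
    using L2 by (intro add_right_mono mult_left_mono is_resolventD(2)[OF g] L2_divide L2_add) auto
  also have "\<dots> \<le> ?\<Phi> g + ?\<Phi> g'"
    using \<open>0 < \<alpha>\<close> by (intro resolvent_functional_midpoint[OF f L2]) simp
  also have "\<dots> = 2 * ?\<Phi> g + 0"
    using is_resolventD(2)[OF g L2(2)] is_resolventD(2)[OF g' L2(1)] by (simp add: mult_2)
  finally have "ennreal (\<alpha> / 4 * ?I) \<le> 0"
    using is_resolvent_finite[OF g] by (auto simp: ennreal_add_left_cancel_le ennreal_mult_eq_top_iff)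
  then have "?I \<le> 0"
    using \<open>0 < \<alpha>\<close> by (simp add: mult_le_0_iff)
  then have "?I = 0"
    by (intro antisym) simp_all
  then have "AE x in M. (g x - g' x)\<^sup>2 = 0"
    using L2_integrable_square[OF L2_diff[OF L2]] by (subst (asm) integral_nonneg_eq_0_iff_AE) auto
  then show ?thesis
    by eventually_elim simp
qed

lemma is_resolvent_zero: "0 < \<alpha> \<Longrightarrow> is_resolvent M E \<alpha> (\<lambda>x. 0) (\<lambda>x. 0)"
  by (simp add: is_resolvent_def resolvent_functional_zero resolvent_penalty_def L2_zero)

lemma is_resolvent_le:
  assumes g1: "is_resolvent M E \<alpha>1 f1 g1" and g2: "is_resolvent M E \<alpha>2 f2 g2"
    and f1: "f1 \<in> L2 M" and f2: "f2 \<in> L2 M" and "0 < \<alpha>1" "0 < \<alpha>2"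
    and swap: "AE x in M. \<alpha>1/2 * (min (g1 x) (g2 x) - f1 x/\<alpha>1)\<^sup>2 + \<alpha>2/2 * (max (g1 x) (g2 x) - f2 x/\<alpha>2)\<^sup>2
                 \<le> \<alpha>1/2 * (g1 x - f1 x/\<alpha>1)\<^sup>2 + \<alpha>2/2 * (g2 x - f2 x/\<alpha>2)\<^sup>2"
  shows "AE x in M. g1 x \<le> g2 x"
proof -
  \<comment> \<open>Passing from \<open>(g1, g2)\<close> to \<open>(min g1 g2, max g1 g2)\<close> increases neither \<open>E\<close> (order
    preserving property) nor the penalties (by \<open>swap\<close>); since \<open>g2\<close> minimises the second functional,
    \<open>min g1 g2\<close> minimises the first, so it equals \<open>g1\<close>.\<close>
  let ?\<Phi>1 = "resolvent_functional M E \<alpha>1 f1" and ?\<Phi>2 = "resolvent_functional M E \<alpha>2 f2"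
  let ?P1 = "resolvent_penalty M \<alpha>1 f1" and ?P2 = "resolvent_penalty M \<alpha>2 f2"
  define lo where "lo x = min (g1 x) (g2 x)" for x
  define hi where "hi x = max (g1 x) (g2 x)" for x
  have L2: "g1 \<in> L2 M" "g2 \<in> L2 M" using g1 g2 by (simp_all add: is_resolventD)
  then have L2': "lo \<in> L2 M" "hi \<in> L2 M" unfolding lo_def hi_def by (auto intro: L2_min L2_max)
  have int1: "integrable M (\<lambda>x. \<alpha>1/2 * (u x - f1 x/\<alpha>1)\<^sup>2)" if "u \<in> L2 M" for u
    using that f1 by (intro integrable_mult_right L2_integrable_square L2_diff L2_divide)
  have int2: "integrable M (\<lambda>x. \<alpha>2/2 * (u x - f2 x/\<alpha>2)\<^sup>2)" if "u \<in> L2 M" for u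
    using that f2 by (intro integrable_mult_right L2_integrable_square L2_diff L2_divide)
  have "?P1 lo + ?P2 hi = (\<integral>x. \<alpha>1/2 * (lo x - f1 x/\<alpha>1)\<^sup>2 + \<alpha>2/2 * (hi x - f2 x/\<alpha>2)\<^sup>2 \<partial>M)"
    unfolding resolvent_penalty_def using int1[OF L2'(1)] int2[OF L2'(2)] by simp
  also have "\<dots> \<le> (\<integral>x. \<alpha>1/2 * (g1 x - f1 x/\<alpha>1)\<^sup>2 + \<alpha>2/2 * (g2 x - f2 x/\<alpha>2)\<^sup>2 \<partial>M)"
    using swap int1 int2 L2 L2' unfolding lo_def hi_def by (intro integral_mono_AE) auto
  also have "\<dots> = ?P1 g1 + ?P2 g2"
    unfolding resolvent_penalty_def using int1[OF L2(1)] int2[OF L2(2)] by simp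
  finally have P_le: "ennreal (?P1 lo) + ennreal (?P2 hi) \<le> ennreal (?P1 g1) + ennreal (?P2 g2)"
    using \<open>0 < \<alpha>1\<close> \<open>0 < \<alpha>2\<close> by (simp add: resolvent_penalty_nonneg ennreal_leI flip: ennreal_plus)
  have E_le: "E hi + E lo \<le> E g1 + E g2"
    unfolding lo_def hi_def by (rule E_max_min_le[OF L2])
  have "?\<Phi>1 lo + ?\<Phi>2 hi = (E hi + E lo) + (ennreal (?P1 lo) + ennreal (?P2 hi))"
    by (simp add: resolvent_functional_def ac_simps)
  also have "\<dots> \<le> (E g1 + E g2) + (ennreal (?P1 g1) + ennreal (?P2 g2))"
    by (rule add_mono[OF E_le P_le])
  also have "\<dots> = ?\<Phi>1 g1 + ?\<Phi>2 g2"
    by (simp add: resolvent_functional_def ac_simps)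
  finally have "?\<Phi>1 lo + ?\<Phi>2 hi \<le> ?\<Phi>1 g1 + ?\<Phi>2 g2" .
  have "?\<Phi>2 g2 + ?\<Phi>1 lo \<le> ?\<Phi>2 hi + ?\<Phi>1 lo"
    by (rule add_right_mono[OF is_resolventD(2)[OF g2 L2'(2)]])
  also have "\<dots> \<le> ?\<Phi>2 g2 + ?\<Phi>1 g1"
    using \<open>?\<Phi>1 lo + ?\<Phi>2 hi \<le> ?\<Phi>1 g1 + ?\<Phi>2 g2\<close> by (simp only: ac_simps)
  finally have "?\<Phi>1 lo \<le> ?\<Phi>1 g1"
    using is_resolvent_finite[OF g2] by (auto simp: ennreal_add_left_cancel_le)
  then have "is_resolvent M E \<alpha>1 f1 lo"
    unfolding is_resolvent_def using L2'(1) is_resolventD(2)[OF g1] order_trans by blast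
  from is_resolvent_unique[OF this g1 f1 \<open>0 < \<alpha>1\<close>] show ?thesis
    by eventually_elim (simp add: lo_def min_def split: if_splits)
qed

lemma is_resolvent_energy_le:
  assumes g: "is_resolvent M E \<alpha> f g" and f: "f \<in> L2 M" and "0 < \<alpha>"
  shows "E g \<le> ennreal (\<integral>x. f x * g x \<partial>M)"
proof -
  let ?P = "resolvent_penalty M \<alpha> f"
  obtain eg where eg: "E g = ennreal eg" "0 \<le> eg"
    using is_resolvent_finite(2)[OF g] by (cases "E g") auto
  have "ennreal (eg + ?P g) \<le> ennreal (?P (\<lambda>x. 0))"
    using is_resolventD(2)[OF g L2_zero] eg \<open>0 < \<alpha>\<close>
    by (simp add: resolvent_functional_def E_zero resolvent_penalty_nonneg ennreal_plus)
  then have "eg + ?P g \<le> ?P (\<lambda>x. 0)"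
    using \<open>0 < \<alpha>\<close> by (simp add: ennreal_le_iff resolvent_penalty_nonneg)
  moreover have "?P g = ?P (\<lambda>x. 0) + \<alpha> / 2 * (\<integral>x. (g x)\<^sup>2 \<partial>M) - (\<integral>x. f x * g x \<partial>M)"
    using is_resolventD(1)[OF g] f \<open>0 < \<alpha>\<close> by (intro resolvent_penalty_expand) auto
  moreover have "0 \<le> \<alpha> / 2 * (\<integral>x. (g x)\<^sup>2 \<partial>M)"
    using \<open>0 < \<alpha>\<close> by simp
  ultimately show ?thesis
    using eg by (simp add: ennreal_leI)
qed

lemma is_resolvent_subgradient:
  assumes g: "is_resolvent M E \<alpha> f g" and f: "f \<in> L2 M" and "0 < \<alpha>"
    and h: "h \<in> L2 M" and "E h \<noteq> \<infinity>"
  shows "enn2real (E g) + (\<integral>x. (f x - \<alpha> * g x) * (h x - g x) \<partial>M) \<le> enn2real (E h)"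
proof -
  let ?P = "resolvent_penalty M \<alpha> f"
  let ?S = "\<integral>x. (f x - \<alpha> * g x) * (h x - g x) \<partial>M"
  let ?D = "\<alpha> / 2 * (\<integral>x. (h x - g x)\<^sup>2 \<partial>M)"
  have g_L2: "g \<in> L2 M" using g by (rule is_resolventD)
  obtain eg where eg: "E g = ennreal eg" "0 \<le> eg"
    using is_resolvent_finite(2)[OF g] by (cases "E g") auto
  obtain eh where eh: "E h = ennreal eh" "0 \<le> eh"
    using \<open>E h \<noteq> \<infinity>\<close> by (cases "E h") auto
  have "eg \<le> eh - ?S + t * ?D" if t: "0 < t" "t \<le> 1" for t
  proof -
    define z where "z x = t * h x + (1 - t) * g x" for x
    have z: "z \<in> L2 M" unfolding z_def using h g_L2 by (intro L2_add L2_cmult)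
    have "ennreal (eg + ?P g) \<le> resolvent_functional M E \<alpha> f z"
      using is_resolventD(2)[OF g z] eg \<open>0 < \<alpha>\<close>
      by (simp add: resolvent_functional_def resolvent_penalty_nonneg ennreal_plus)
    also have "\<dots> \<le> ennreal (t * eh + (1 - t) * eg) + ennreal (?P z)"
      unfolding resolvent_functional_def z_def using E_convex[OF h g_L2, of t] t eg eh
      by (intro add_right_mono) (simp add: ennreal_mult' ennreal_plus)
    also have "\<dots> = ennreal (t * eh + (1 - t) * eg + ?P z)"
      using t eg eh \<open>0 < \<alpha>\<close> by (simp add: resolvent_penalty_nonneg ennreal_plus)
    finally have "eg + ?P g \<le> t * eh + (1 - t) * eg + ?P z"
      using t eg eh \<open>0 < \<alpha>\<close> by (subst (asm) ennreal_le_iff) (auto intro!: add_nonneg_nonneg resolvent_penalty_nonneg)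
    also have "?P z = ?P g - t * ?S + t\<^sup>2 * ?D"
      unfolding z_def using f g_L2 h \<open>0 < \<alpha>\<close> by (intro resolvent_penalty_segment) auto
    finally have "t * eg \<le> t * (eh - ?S + t * ?D)"
      by (simp add: algebra_simps power2_eq_square)
    then show ?thesis using t by simp
  qed
  then have "eg \<le> eh - ?S"
    by (rule le_of_forall_le_add_mult)
  then show ?thesis using eg eh by simp
qed

lemma is_resolvent_variational:
  assumes g: "is_resolvent M E \<alpha> f g" and f: "f \<in> L2 M" and "0 < \<alpha>"
    and h: "h \<in> L2 M" and "E h \<noteq> \<infinity>"
  shows "(\<integral>x. f x * h x \<partial>M) \<le> enn2real (E h) + (\<integral>x. f x * g x \<partial>M) + \<alpha> / 4 * (\<integral>x. (h x)\<^sup>2 \<partial>M)"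
proof -
  have g_L2: "g \<in> L2 M" using g by (rule is_resolventD)
  have int: "integrable M (\<lambda>x. f x * h x)" "integrable M (\<lambda>x. f x * g x)" "integrable M (\<lambda>x. (h x)\<^sup>2)"
    "integrable M (\<lambda>x. (f x - \<alpha> * g x) * (h x - g x))"
    using f g_L2 h by (auto intro!: integrable_L2_mult L2_integrable_square L2_diff L2_cmult)
  have "(\<integral>x. f x * h x \<partial>M) - (\<integral>x. f x * g x \<partial>M) - \<alpha> / 4 * (\<integral>x. (h x)\<^sup>2 \<partial>M)
      = (\<integral>x. f x * h x - f x * g x - \<alpha> / 4 * (h x)\<^sup>2 \<partial>M)"
    using int by simp
  also have "\<dots> \<le> (\<integral>x. (f x - \<alpha> * g x) * (h x - g x) \<partial>M)"
  proof (rule integral_mono)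
    fix x
    have "0 \<le> \<alpha> * (h x / 2 - g x)\<^sup>2" using \<open>0 < \<alpha>\<close> by simp
    then show "f x * h x - f x * g x - \<alpha> / 4 * (h x)\<^sup>2 \<le> (f x - \<alpha> * g x) * (h x - g x)"
      by (simp add: power2_eq_square algebra_simps)
  qed (use int in auto)
  also have "\<dots> \<le> enn2real (E h)"
    using is_resolvent_subgradient[OF g f \<open>0 < \<alpha>\<close> h \<open>E h \<noteq> \<infinity>\<close>] enn2real_nonneg[of "E g"] by linarith
  finally show ?thesis by simp
qed

lemma is_resolvent_resolvent_L2: "f \<in> L2 M \<Longrightarrow> 0 < \<alpha> \<Longrightarrow> is_resolvent M E \<alpha> f (resolvent_L2 M E \<alpha> f)"
  unfolding resolvent_L2_eq_Eps by (rule someI_ex[OF is_resolvent_exists])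

lemma resolvent_L2_nonneg:
  assumes f: "f \<in> L2 M" and "\<And>x. 0 \<le> f x" and "0 < \<alpha>"
  shows "AE x in M. 0 \<le> resolvent_L2 M E \<alpha> f x"
proof (rule is_resolvent_le[OF is_resolvent_zero is_resolvent_resolvent_L2[OF f] L2_zero f])
  show "AE x in M. \<alpha>/2 * (min 0 (resolvent_L2 M E \<alpha> f x) - 0/\<alpha>)\<^sup>2
      + \<alpha>/2 * (max 0 (resolvent_L2 M E \<alpha> f x) - f x/\<alpha>)\<^sup>2
    \<le> \<alpha>/2 * (0 - 0/\<alpha>)\<^sup>2 + \<alpha>/2 * (resolvent_L2 M E \<alpha> f x - f x/\<alpha>)\<^sup>2"
    using assms by (intro AE_I2 square_dist_min_max_le) auto
qed (use \<open>0 < \<alpha>\<close> in auto)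

lemma resolvent_L2_mono:
  assumes f1: "f1 \<in> L2 M" and f2: "f2 \<in> L2 M" and "\<And>x. f1 x \<le> f2 x" and "0 < \<alpha>"
  shows "AE x in M. resolvent_L2 M E \<alpha> f1 x \<le> resolvent_L2 M E \<alpha> f2 x"
  using is_resolvent_le[OF is_resolvent_resolvent_L2[OF f1] is_resolvent_resolvent_L2[OF f2] f1 f2]
    square_dist_min_max_le[OF \<open>0 < \<alpha>\<close>] assms by simp

lemma resolvent_L2_antimono:
  assumes f: "f \<in> L2 M" and "\<And>x. 0 \<le> f x" and "0 < \<alpha>" and "\<alpha> \<le> \<beta>"
  shows "AE x in M. resolvent_L2 M E \<beta> f x \<le> resolvent_L2 M E \<alpha> f x"
proof -
  have "0 < \<beta>" using assms by linarith
  show ?thesis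
  proof (rule is_resolvent_le[OF is_resolvent_resolvent_L2[OF f] is_resolvent_resolvent_L2[OF f] f f])
    show "AE x in M. \<beta>/2 * (min (resolvent_L2 M E \<beta> f x) (resolvent_L2 M E \<alpha> f x) - f x/\<beta>)\<^sup>2
        + \<alpha>/2 * (max (resolvent_L2 M E \<beta> f x) (resolvent_L2 M E \<alpha> f x) - f x/\<alpha>)\<^sup>2
      \<le> \<beta>/2 * (resolvent_L2 M E \<beta> f x - f x/\<beta>)\<^sup>2 + \<alpha>/2 * (resolvent_L2 M E \<alpha> f x - f x/\<alpha>)\<^sup>2"
      using resolvent_L2_nonneg[OF assms(1-3)]
      by eventually_elim (rule square_dist_min_max_le_param[OF \<open>0 < \<alpha>\<close> \<open>\<alpha> \<le> \<beta>\<close>])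
  qed (use \<open>0 < \<alpha>\<close> \<open>0 < \<beta>\<close> in auto)
qed

lemma ME_if_E_finite:
  assumes g: "g \<in> L2 M" and "E g \<noteq> \<infinity>"
  shows "g \<in> ME M E"
proof -
  obtain e where e: "E g = ennreal e" "0 \<le> e"
    using \<open>E g \<noteq> \<infinity>\<close> by (cases "E g") auto
  have "((\<lambda>l. E (\<lambda>x. l * g x)) \<longlongrightarrow> 0) (at_right 0)"
  proof (rule tendsto_sandwich[where f="\<lambda>_. 0" and h="\<lambda>l. ennreal (l * e)"])
    show "\<forall>\<^sub>F l in at_right (0::real). E (\<lambda>x. l * g x) \<le> ennreal (l * e)"
    proof (rule eventually_at_rightI[where b=1])
      fix l :: real assume "l \<in> {0<..<1}"
      then have "E (\<lambda>x. l * g x) \<le> ennreal l * E g"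
        by (intro E_cmult_le[OF g]) auto
      then show "E (\<lambda>x. l * g x) \<le> ennreal (l * e)"
        using \<open>l \<in> {0<..<1}\<close> e by (simp add: ennreal_mult)
    qed simp
    have "((\<lambda>l. ennreal (l * e)) \<longlongrightarrow> ennreal (0 * e)) (at_right 0)"
      by (intro tendsto_ennrealI tendsto_intros)
    then show "((\<lambda>l. ennreal (l * e)) \<longlongrightarrow> 0) (at_right 0)"
      by simp
  qed auto
  with g show ?thesis
    by (simp add: ME_def)
qed

lemma Lnorm_le:
  assumes g: "g \<in> L2 M" and "1 \<le> B" and "E g \<le> ennreal B"
  shows "Lnorm M E g \<le> ennreal B"
proof -
  have "E (\<lambda>x. g x / B) = E (\<lambda>x. (1 / B) * g x)"
    by simp
  also have "\<dots> \<le> ennreal (1 / B) * E g"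
    using \<open>1 \<le> B\<close> by (intro E_cmult_le[OF g]) auto
  also have "\<dots> \<le> ennreal (1 / B) * ennreal B"
    by (intro mult_left_mono \<open>E g \<le> ennreal B\<close>) simp
  also have "\<dots> = 1"
    using \<open>1 \<le> B\<close> by (simp flip: ennreal_mult)
  finally show ?thesis
    unfolding Lnorm_def using \<open>1 \<le> B\<close> by (intro INF_lower2[of B]) auto
qed

lemma nn_integral_abs_mult_le_hardy_const:
  assumes g: "g \<in> L2 M" and "1 \<le> B" and "E g \<le> ennreal B"
  shows "(\<integral>\<^sup>+x. ennreal \<bar>g x\<bar> * w x \<partial>M) \<le> hardy_const M E w * ennreal B"
proof (rule le_mult_of_divide_le_ennreal)
  have "g \<in> ME M E"
    using \<open>E g \<le> ennreal B\<close> by (intro ME_if_E_finite g) (auto simp: top_unique)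
  then show "(\<integral>\<^sup>+x. ennreal \<bar>g x\<bar> * w x \<partial>M) / Lnorm M E g \<le> hardy_const M E w"
    unfolding hardy_const_def by (rule SUP_upper)
  show "Lnorm M E g \<le> ennreal B"
    using assms by (rule Lnorm_le)
qed (use \<open>1 \<le> B\<close> in simp)

end

section \<open>Truncations and the Green operator\<close>

definition truncation :: "'a measure \<Rightarrow> ('a \<Rightarrow> ennreal) \<Rightarrow> nat \<Rightarrow> 'a \<Rightarrow> real" where
  "truncation M w n x = enn2real (min (w x) (of_nat n)) * indicator (exhaust M n) x"

lemma resolvent_eq_SUP_truncation:
  "resolvent M E \<alpha> w x = (SUP n. ennreal (resolvent_L2 M E \<alpha> (truncation M w n) x))"
  unfolding resolvent_def truncation_def ..

lemma truncation_nonneg: "0 \<le> truncation M w n x"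
  by (simp add: truncation_def)

lemma min_of_nat_less_top: "min a (of_nat n) < (top :: ennreal)"
  using min.cobounded2 of_nat_less_top by (rule le_less_trans)

lemma ennreal_truncation: "x \<in> exhaust M n \<Longrightarrow> ennreal (truncation M w n x) = min (w x) (of_nat n)"
  by (simp add: truncation_def min_of_nat_less_top)

lemma truncation_le: "ennreal (truncation M w n x) \<le> w x"
  by (cases "x \<in> exhaust M n") (simp_all add: ennreal_truncation, simp add: truncation_def)

lemma truncation_le_of_nat: "truncation M w n x \<le> n"
proof -
  have "enn2real (min (w x) (of_nat n)) \<le> enn2real (of_nat n :: ennreal)"
    by (intro enn2real_mono) (auto simp: of_nat_less_top)
  then show ?thesis by (simp add: truncation_def indicator_def)
qed

context
  fixes M :: "'a measure"
  assumes sf: "sigma_finite_measure M"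
begin

lemma exhaust_properties:
  "range (exhaust M) \<subseteq> sets M" "\<Union>(range (exhaust M)) = space M"
  "emeasure M (exhaust M n) \<noteq> \<infinity>" "incseq (exhaust M)"
proof -
  have "\<exists>A. range A \<subseteq> sets M \<and> \<Union>(range A) = space M \<and> (\<forall>i. emeasure M (A i) \<noteq> \<infinity>) \<and> incseq A"
    using sigma_finite_measure.sigma_finite_incseq[OF sf] by metis
  from someI_ex[OF this]
  show "range (exhaust M) \<subseteq> sets M" "\<Union>(range (exhaust M)) = space M"
    "emeasure M (exhaust M n) \<noteq> \<infinity>" "incseq (exhaust M)"
    unfolding exhaust_def by auto
qed

lemma truncation_measurable [measurable]:
  "w \<in> borel_measurable M \<Longrightarrow> truncation M w n \<in> borel_measurable M"
  using exhaust_properties(1) unfolding truncation_def by (auto intro!: borel_measurable_times borel_measurable_indicator)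

lemma truncation_L2:
  assumes "w \<in> borel_measurable M"
  shows "truncation M w n \<in> L2 M"
proof (rule L2I_square_bound)
  show "truncation M w n \<in> borel_measurable M"
    using assms by measurable
  show "integrable M (\<lambda>x. (real n)\<^sup>2 * indicator (exhaust M n) x)"
    using exhaust_properties(1,3) by (auto simp: less_top intro!: integrable_mult_right integrable_real_indicator)
  have "(truncation M w n x)\<^sup>2 \<le> (real n)\<^sup>2 * indicator (exhaust M n) x" for x
    using truncation_le_of_nat[of M w n x] truncation_nonneg[of M w n x]
    by (cases "x \<in> exhaust M n") (auto simp: truncation_def intro: power_mono)
  then show "AE x in M. (truncation M w n x)\<^sup>2 \<le> (real n)\<^sup>2 * indicator (exhaust M n) x"
    by simp
qed

lemma truncation_mono: "m \<le> n \<Longrightarrow> truncation M w m x \<le> truncation M w n x"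
proof -
  assume "m \<le> n"
  then have "indicator (exhaust M m) x \<le> (indicator (exhaust M n) x :: real)"
    using exhaust_properties(4) by (auto simp: indicator_def incseq_def)
  moreover have "enn2real (min (w x) (of_nat m)) \<le> enn2real (min (w x) (of_nat n))"
    using \<open>m \<le> n\<close> by (intro enn2real_mono min.mono min_of_nat_less_top) auto
  ultimately show ?thesis
    unfolding truncation_def by (intro mult_mono) auto
qed

lemma SUP_truncation: "x \<in> space M \<Longrightarrow> (SUP n. ennreal (truncation M w n x)) = w x"
proof (rule antisym)
  assume "x \<in> space M"
  then obtain N where "x \<in> exhaust M N" using exhaust_properties(2) by auto
  then have "x \<in> exhaust M (max n N)" for n
    using exhaust_properties(4) by (meson incseqD max.cobounded2 subsetD)
  then have "min (w x) (of_nat n) \<le> (SUP n. ennreal (truncation M w n x))" for n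
    by (intro SUP_upper2[of "max n N"]) (auto simp: ennreal_truncation intro!: min.coboundedI2)
  then have "(SUP n. min (w x) (of_nat n)) \<le> (SUP n. ennreal (truncation M w n x))"
    by (rule SUP_least)
  moreover have "(SUP n. min (w x) (of_nat n :: ennreal)) = w x"
    by (simp add: inf_SUP[symmetric, where a="w x"] ennreal_SUP_of_nat_eq_top flip: inf_min)
  ultimately show "w x \<le> (SUP n. ennreal (truncation M w n x))" by simp
qed (intro SUP_least truncation_le)

lemma nn_integral_mult_truncation_SUP:
  assumes [measurable]: "u \<in> borel_measurable M" "w \<in> borel_measurable M"
  shows "(\<integral>\<^sup>+x. u x * w x \<partial>M) = (SUP n. \<integral>\<^sup>+x. u x * ennreal (truncation M w n x) \<partial>M)"
proof -
  have "(\<integral>\<^sup>+x. u x * w x \<partial>M) = (\<integral>\<^sup>+x. (SUP n. u x * ennreal (truncation M w n x)) \<partial>M)"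
    by (intro nn_integral_cong) (simp add: SUP_truncation SUP_mult_left_ennreal[symmetric])
  also have "\<dots> = (SUP n. \<integral>\<^sup>+x. u x * ennreal (truncation M w n x) \<partial>M)"
    by (intro nn_integral_monotone_convergence_SUP incseq_SucI le_funI mult_left_mono ennreal_leI
        truncation_mono) auto
  finally show ?thesis .
qed

end

definition resolvent_approx ::
  "'a measure \<Rightarrow> (('a \<Rightarrow> real) \<Rightarrow> ennreal) \<Rightarrow> ('a \<Rightarrow> ennreal) \<Rightarrow> nat \<Rightarrow> nat \<Rightarrow> 'a \<Rightarrow> real" where
  "resolvent_approx M E w k n = resolvent_L2 M E (1 / Suc k) (truncation M w n)"

lemma green_eq_SUP_resolvent_approx:
  "green M E w x = (SUP k. SUP n. ennreal (resolvent_approx M E w k n x))"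
  unfolding green_def resolvent_eq_SUP_truncation resolvent_approx_def ..

lemma resolvent_approx_le_green: "ennreal (resolvent_approx M E w k n x) \<le> green M E w x"
  unfolding green_eq_SUP_resolvent_approx by (rule SUP_upper2[of k], simp, rule SUP_upper, simp)

lemma hardy_const_divide:
  assumes [measurable]: "w \<in> borel_measurable M" and "0 < C"
  shows "hardy_const M E (\<lambda>x. w x / ennreal C) = hardy_const M E w / ennreal C"
proof -
  have "(\<integral>\<^sup>+x. ennreal \<bar>f x\<bar> * (w x / ennreal C) \<partial>M) / Lnorm M E f
      = (\<integral>\<^sup>+x. ennreal \<bar>f x\<bar> * w x \<partial>M) / Lnorm M E f * inverse (ennreal C)" if "f \<in> ME M E" for f
  proof -
    have [measurable]: "f \<in> borel_measurable M"
      using that by (simp add: ME_def L2_borel_measurable)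
    have "(\<integral>\<^sup>+x. ennreal \<bar>f x\<bar> * (w x / ennreal C) \<partial>M) = (\<integral>\<^sup>+x. ennreal \<bar>f x\<bar> * w x \<partial>M) / ennreal C"
      by (simp add: ennreal_times_divide nn_integral_divide)
    then show ?thesis
      by (simp add: divide_ennreal_def ac_simps)
  qed
  then show ?thesis
    unfolding hardy_const_def by (simp add: SUP_mult_right_ennreal divide_ennreal_def[of _ "ennreal C"] cong: SUP_cong)
qed

section \<open>The Hardy constant and the capacity\<close>

context
  fixes M :: "'a measure" and E :: "('a \<Rightarrow> real) \<Rightarrow> ennreal"
  assumes sf: "sigma_finite_measure M" and form: "nonlinear_order_preserving_form M E"
begin

lemma resolvent_approx_L2:
  "w \<in> borel_measurable M \<Longrightarrow> resolvent_approx M E w k n \<in> L2 M"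
  unfolding resolvent_approx_def
  by (intro is_resolventD(1)[OF is_resolvent_resolvent_L2[OF form truncation_L2[OF sf]]]) auto

lemma AE_resolvent_approx_mono:
  assumes w: "w \<in> borel_measurable M"
  shows "AE x in M. \<forall>k n k' n'. k \<le> k' \<longrightarrow> n \<le> n' \<longrightarrow> resolvent_approx M E w k n x \<le> resolvent_approx M E w k' n' x"
proof -
  let ?G = "resolvent_approx M E w"
  have "AE x in M. ?G k n x \<le> ?G k (Suc n) x" for k n
    unfolding resolvent_approx_def
    by (intro resolvent_L2_mono[OF form] truncation_L2[OF sf w] truncation_mono[OF sf]) auto
  moreover have "AE x in M. ?G k n x \<le> ?G (Suc k) n x" for k n
    unfolding resolvent_approx_def
    by (intro resolvent_L2_antimono[OF form] truncation_L2[OF sf w] truncation_nonneg) (auto simp: field_simps)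
  ultimately have "AE x in M. \<forall>k n. ?G k n x \<le> ?G k (Suc n) x \<and> ?G k n x \<le> ?G (Suc k) n x"
    by (simp add: AE_all_countable AE_conj_iff)
  then show ?thesis
  proof eventually_elim
    case (elim x)
    have "incseq (\<lambda>n. ?G k n x)" "incseq (\<lambda>k. ?G k n x)" for k n
      using elim by (simp_all add: incseq_Suc_iff)
    then show ?case
      by (meson incseqD order_trans)
  qed
qed

lemma Kfun_eq_SUP_diagonal:
  assumes w[measurable]: "w \<in> borel_measurable M"
  shows "Kfun M E w = (SUP j. \<integral>\<^sup>+x. w x * ennreal (resolvent_approx M E w j j x) \<partial>M)"
proof -
  let ?G = "resolvent_approx M E w"
  have [measurable]: "?G k n \<in> borel_measurable M" for k n
    using resolvent_approx_L2[OF w] by (rule L2_borel_measurable)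
  have "AE x in M. green M E w x = (SUP j. ennreal (?G j j x))"
    using AE_resolvent_approx_mono[OF w]
  proof eventually_elim
    case (elim x)
    have "ennreal (?G k n x) \<le> (SUP j. ennreal (?G j j x))" for k n
      using elim by (intro SUP_upper2[of "max k n"] ennreal_leI) auto
    then have "green M E w x \<le> (SUP j. ennreal (?G j j x))"
      unfolding green_eq_SUP_resolvent_approx by (intro SUP_least)
    moreover have "(SUP j. ennreal (?G j j x)) \<le> green M E w x"
      by (intro SUP_least resolvent_approx_le_green)
    ultimately show ?case by (rule antisym)
  qed
  then have "Kfun M E w = (\<integral>\<^sup>+x. (SUP j. w x * ennreal (?G j j x)) \<partial>M)"
    unfolding Kfun_def by (intro nn_integral_cong_AE) (auto elim!: eventually_mono simp: SUP_mult_left_ennreal)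
  also have "\<dots> = (SUP j. \<integral>\<^sup>+x. w x * ennreal (?G j j x) \<partial>M)"
    using AE_resolvent_approx_mono[OF w]
    by (intro nn_integral_monotone_convergence_SUP_AE)
      (auto elim!: eventually_mono intro!: mult_left_mono ennreal_leI)
  finally show ?thesis .
qed

lemma nn_integral_resolvent_le_hardy_const:
  assumes "hardy_const M E w < 1"
    and v: "v \<in> L2 M" and v_nonneg: "\<And>x. 0 \<le> v x" and v_le: "\<And>x. ennreal (v x) \<le> w x" and "0 < \<alpha>"
  shows "(\<integral>\<^sup>+x. w x * ennreal (resolvent_L2 M E \<alpha> v x) \<partial>M) \<le> hardy_const M E w"
proof -
  define g where "g = resolvent_L2 M E \<alpha> v"
  have g_res: "is_resolvent M E \<alpha> v g"
    unfolding g_def using v \<open>0 < \<alpha>\<close> by (rule is_resolvent_resolvent_L2[OF form])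
  have g: "g \<in> L2 M" using g_res by (rule is_resolventD)
  obtain \<rho> where \<rho>: "hardy_const M E w = ennreal \<rho>" "0 \<le> \<rho>" "\<rho> < 1"
    using \<open>hardy_const M E w < 1\<close> by (cases "hardy_const M E w") auto
  define kk where "kk = (\<integral>x. v x * g x \<partial>M)"
  define B where "B = max 1 kk"
  have "E g \<le> ennreal B"
    using is_resolvent_energy_le[OF form g_res v \<open>0 < \<alpha>\<close>] unfolding kk_def[symmetric] B_def
    by (rule order_trans) (simp add: ennreal_leI)
  then have "(\<integral>\<^sup>+x. ennreal \<bar>g x\<bar> * w x \<partial>M) \<le> ennreal \<rho> * ennreal B"
    unfolding \<rho>(1)[symmetric] by (intro nn_integral_abs_mult_le_hardy_const[OF form g]) (simp add: B_def)
  also have "\<dots> = ennreal (\<rho> * B)"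
    using \<rho> by (intro ennreal_mult[symmetric]) (auto simp: B_def)
  finally have X: "(\<integral>\<^sup>+x. ennreal \<bar>g x\<bar> * w x \<partial>M) \<le> ennreal (\<rho> * B)" .
  have "ennreal kk \<le> ennreal (\<rho> * B)"
    unfolding kk_def using ennreal_integral_mult_le_nn_integral_abs[OF v g v_nonneg v_le] X by (rule order_trans)
  then have "kk \<le> \<rho> * B"
    using \<rho> by (subst (asm) ennreal_le_iff) (auto simp: B_def)
  with \<rho> have "B = 1"
    unfolding B_def by (smt (verit) mult_le_cancel_right1)
  have "(\<integral>\<^sup>+x. w x * ennreal (g x) \<partial>M) \<le> (\<integral>\<^sup>+x. ennreal \<bar>g x\<bar> * w x \<partial>M)"
    by (intro nn_integral_mono) (simp add: mult.commute mult_left_mono ennreal_leI)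
  also have "\<dots> \<le> hardy_const M E w"
    using X \<open>B = 1\<close> \<rho> by simp
  finally show ?thesis
    unfolding g_def .
qed

lemma Kfun_le_hardy_const:
  assumes w: "w \<in> borel_measurable M" and "hardy_const M E w < 1"
  shows "Kfun M E w \<le> hardy_const M E w"
  unfolding Kfun_eq_SUP_diagonal[OF w] resolvent_approx_def
  by (intro SUP_least nn_integral_resolvent_le_hardy_const \<open>hardy_const M E w < 1\<close>
      truncation_L2[OF sf w] truncation_nonneg truncation_le) simp

lemma Ktilde_le_hardy_const:
  assumes w[measurable]: "w \<in> borel_measurable M"
  shows "Ktilde M E w \<le> hardy_const M E w"
proof (cases "hardy_const M E w")
  case (real \<mu>)
  show ?thesis
  proof (rule ennreal_le_epsilon)
    fix e :: real assume "0 < e"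
    have "hardy_const M E (\<lambda>x. w x / ennreal (\<mu> + e)) = hardy_const M E w / ennreal (\<mu> + e)"
      using real \<open>0 < e\<close> by (intro hardy_const_divide w) simp
    also have "\<dots> = ennreal (\<mu> / (\<mu> + e))"
      using real \<open>0 < e\<close> by (simp add: divide_ennreal del: ennreal_plus)
    finally have "hardy_const M E (\<lambda>x. w x / ennreal (\<mu> + e)) = ennreal (\<mu> / (\<mu> + e))" .
    moreover have "\<mu> / (\<mu> + e) < 1"
      using real \<open>0 < e\<close> by simp
    ultimately have "Kfun M E (\<lambda>x. w x / ennreal (\<mu> + e)) \<le> 1"
      using Kfun_le_hardy_const[of "\<lambda>x. w x / ennreal (\<mu> + e)"] by (simp add: order_trans)
    then have "Ktilde M E w \<le> ennreal (\<mu> + e)"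
      unfolding Ktilde_def using real \<open>0 < e\<close> by (intro INF_lower2[of "\<mu> + e"]) auto
    then show "Ktilde M E w \<le> hardy_const M E w + ennreal e"
      using real \<open>0 < e\<close> by (simp add: ennreal_plus)
  qed
qed simp

lemma integral_truncation_resolvent_le_Kfun:
  assumes w: "w \<in> borel_measurable M"
  shows "ennreal (\<integral>x. truncation M w n x * max 0 (resolvent_approx M E w k n x) \<partial>M) \<le> Kfun M E w"
proof -
  let ?v = "truncation M w n" and ?g = "resolvent_approx M E w k n"
  have "?v \<in> L2 M" "(\<lambda>x. max 0 (?g x)) \<in> L2 M"
    using truncation_L2[OF sf w] resolvent_approx_L2[OF w] by (auto intro: L2_max L2_zero)
  then have "ennreal (\<integral>x. ?v x * max 0 (?g x) \<partial>M) = (\<integral>\<^sup>+x. ennreal (?v x * max 0 (?g x)) \<partial>M)"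
    by (intro nn_integral_eq_integral[symmetric] integrable_L2_mult) (auto simp: truncation_nonneg)
  also have "\<dots> \<le> (\<integral>\<^sup>+x. w x * green M E w x \<partial>M)"
  proof (intro nn_integral_mono)
    fix x
    have "ennreal (?v x * max 0 (?g x)) = ennreal (?v x) * ennreal (?g x)"
      by (simp add: ennreal_mult truncation_nonneg max_def ennreal_neg)
    also have "\<dots> \<le> w x * green M E w x"
      by (intro mult_mono truncation_le resolvent_approx_le_green) auto
    finally show "ennreal (?v x * max 0 (?g x)) \<le> w x * green M E w x" .
  qed
  finally show ?thesis
    unfolding Kfun_def .
qed

lemma integral_truncation_mult_le:
  assumes w: "w \<in> borel_measurable M" and h: "h \<in> L2 M" and "E h \<noteq> \<infinity>"
  shows "ennreal (\<integral>x. truncation M w n x * h x \<partial>M)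
    \<le> E h + Kfun M E w + ennreal (1 / Suc k / 4 * (\<integral>x. (h x)\<^sup>2 \<partial>M))"
proof -
  let ?\<alpha> = "1 / real (Suc k)" and ?v = "truncation M w n" and ?g = "resolvent_approx M E w k n"
  have v: "?v \<in> L2 M" by (rule truncation_L2[OF sf w])
  have g: "is_resolvent M E ?\<alpha> ?v ?g"
    unfolding resolvent_approx_def using v by (intro is_resolvent_resolvent_L2[OF form]) auto
  have "(\<integral>x. ?v x * ?g x \<partial>M) \<le> (\<integral>x. ?v x * max 0 (?g x) \<partial>M)"
    using v is_resolventD(1)[OF g]
    by (intro integral_mono integrable_L2_mult L2_max L2_zero mult_left_mono truncation_nonneg) auto
  then have "(\<integral>x. ?v x * h x \<partial>M)
      \<le> enn2real (E h) + (\<integral>x. ?v x * max 0 (?g x) \<partial>M) + ?\<alpha> / 4 * (\<integral>x. (h x)\<^sup>2 \<partial>M)"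
    using is_resolvent_variational[OF form g v _ h \<open>E h \<noteq> \<infinity>\<close>] by simp
  then have "ennreal (\<integral>x. ?v x * h x \<partial>M)
      \<le> ennreal (enn2real (E h)) + ennreal (\<integral>x. ?v x * max 0 (?g x) \<partial>M) + ennreal (?\<alpha> / 4 * (\<integral>x. (h x)\<^sup>2 \<partial>M))"
    by (simp add: ennreal_leI truncation_nonneg integral_nonneg flip: ennreal_plus)
  also have "\<dots> \<le> E h + Kfun M E w + ennreal (?\<alpha> / 4 * (\<integral>x. (h x)\<^sup>2 \<partial>M))"
    using \<open>E h \<noteq> \<infinity>\<close> by (intro add_mono integral_truncation_resolvent_le_Kfun w) (simp_all add: less_top)
  finally show ?thesis .
qed

lemma nn_integral_abs_mult_le_E_add_Kfun:
  assumes w[measurable]: "w \<in> borel_measurable M" and h: "h \<in> L2 M"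
  shows "(\<integral>\<^sup>+x. ennreal \<bar>h x\<bar> * w x \<partial>M) \<le> E h + Kfun M E w"
proof (cases "E h = \<infinity>")
  case False
  define u where "u x = \<bar>h x\<bar>" for x
  have u: "u \<in> L2 M" "E u \<le> E h"
    unfolding u_def using h by (simp_all add: L2_abs E_abs[OF form])
  then have "E u \<noteq> \<infinity>" using False by (auto simp: top_unique)
  have u_nonneg: "0 \<le> u x" for x by (simp add: u_def)
  have [measurable]: "u \<in> borel_measurable M" using u(1) by (rule L2_borel_measurable)
  have "ennreal (\<integral>x. truncation M w n x * u x \<partial>M) \<le> E u + Kfun M E w" for n
  proof (rule tendsto_le[OF sequentially_bot _ tendsto_const])
    have "(\<lambda>k. 1 / real (Suc k)) \<longlonglongrightarrow> 0"
      using LIMSEQ_inverse_real_of_nat by (simp add: inverse_eq_divide)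
    then have "(\<lambda>k. 1 / real (Suc k) / 4 * (\<integral>x. (u x)\<^sup>2 \<partial>M)) \<longlonglongrightarrow> 0"
      by (intro tendsto_mult_left_zero tendsto_divide_zero)
    then show "(\<lambda>k. E u + Kfun M E w + ennreal (1 / Suc k / 4 * (\<integral>x. (u x)\<^sup>2 \<partial>M))) \<longlonglongrightarrow> E u + Kfun M E w"
      using tendsto_add[OF tendsto_const tendsto_ennrealI] by fastforce
    show "\<forall>\<^sub>F k in sequentially. ennreal (\<integral>x. truncation M w n x * u x \<partial>M)
        \<le> E u + Kfun M E w + ennreal (1 / Suc k / 4 * (\<integral>x. (u x)\<^sup>2 \<partial>M))"
      using integral_truncation_mult_le[OF w u(1) \<open>E u \<noteq> \<infinity>\<close>] by simp
  qed
  moreover have "(\<integral>\<^sup>+x. ennreal (u x) * ennreal (truncation M w n x) \<partial>M) = ennreal (\<integral>x. truncation M w n x * u x \<partial>M)" for n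
  proof -
    have "(\<integral>\<^sup>+x. ennreal (u x) * ennreal (truncation M w n x) \<partial>M) = (\<integral>\<^sup>+x. ennreal (truncation M w n x * u x) \<partial>M)"
      by (intro nn_integral_cong) (simp add: ennreal_mult'' truncation_nonneg mult.commute)
    also have "\<dots> = ennreal (\<integral>x. truncation M w n x * u x \<partial>M)"
      using u(1) truncation_L2[OF sf w]
      by (intro nn_integral_eq_integral integrable_L2_mult) (auto simp: u_nonneg truncation_nonneg)
    finally show ?thesis .
  qed
  ultimately have "(\<integral>\<^sup>+x. ennreal (u x) * w x \<partial>M) \<le> E u + Kfun M E w"
    by (simp add: nn_integral_mult_truncation_SUP[OF sf] SUP_least)
  also have "\<dots> \<le> E h + Kfun M E w"
    using u(2) by (rule add_right_mono)
  finally show ?thesis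
    by (simp add: u_def)
qed simp

lemma nn_integral_abs_mult_le:
  assumes w[measurable]: "w \<in> borel_measurable M" and f: "f \<in> L2 M"
    and l: "0 < l" "E (\<lambda>x. f x / l) \<le> 1" and C: "0 < C" "Kfun M E (\<lambda>x. w x / ennreal C) \<le> 1"
  shows "(\<integral>\<^sup>+x. ennreal \<bar>f x\<bar> * w x \<partial>M) \<le> ennreal (2 * C * l)"
proof -
  have [measurable]: "f \<in> borel_measurable M" using f by (rule L2_borel_measurable)
  have "ennreal \<bar>f x\<bar> * w x = ennreal (C * l) * (ennreal \<bar>f x / l\<bar> * (w x / ennreal C))" for x
    using l(1) C(1) by (rule ennreal_abs_mult_rescale)
  then have "(\<integral>\<^sup>+x. ennreal \<bar>f x\<bar> * w x \<partial>M)
      = ennreal (C * l) * (\<integral>\<^sup>+x. ennreal \<bar>f x / l\<bar> * (w x / ennreal C) \<partial>M)"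
    by (simp add: nn_integral_cmult)
  also have "\<dots> \<le> ennreal (C * l) * (E (\<lambda>x. f x / l) + Kfun M E (\<lambda>x. w x / ennreal C))"
    using f by (intro mult_left_mono nn_integral_abs_mult_le_E_add_Kfun L2_divide) auto
  also have "\<dots> \<le> ennreal (C * l) * (1 + 1)"
    using add_mono[OF l(2) C(2)] by (rule mult_left_mono) simp
  also have "\<dots> = ennreal (2 * C * l)"
    using l C by (simp add: ennreal_mult' mult_ac)
  finally show ?thesis .
qed

lemma hardy_const_le_two_Ktilde:
  assumes w: "w \<in> borel_measurable M"
  shows "hardy_const M E w \<le> 2 * Ktilde M E w"
  unfolding hardy_const_def
proof (rule SUP_least)
  fix f assume "f \<in> ME M E"
  then have f: "f \<in> L2 M" by (simp add: ME_def)
  show "(\<integral>\<^sup>+x. ennreal \<bar>f x\<bar> * w x \<partial>M) / Lnorm M E f \<le> 2 * Ktilde M E w"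
    unfolding Ktilde_def
  proof (rule le_mult_INF_ennreal)
    fix C assume C: "C \<in> {C. 0 < C \<and> Kfun M E (\<lambda>x. w x / ennreal C) \<le> 1}"
    have "(\<integral>\<^sup>+x. ennreal \<bar>f x\<bar> * w x \<partial>M) \<le> ennreal (2 * C) * Lnorm M E f"
      unfolding Lnorm_def using C
      by (intro le_mult_INF_ennreal) (auto simp: ennreal_mult'[symmetric] intro: nn_integral_abs_mult_le[OF w f])
    then show "(\<integral>\<^sup>+x. ennreal \<bar>f x\<bar> * w x \<partial>M) / Lnorm M E f \<le> 2 * ennreal C"
      using C by (intro divide_le_of_le_mult_ennreal) (simp add: ennreal_mult')
  qed simp_all
qed

end

theorem corollary4p3:
  fixes M :: "'a measure" and E :: "('a \<Rightarrow> real) \<Rightarrow> ennreal" and w :: "'a \<Rightarrow> ennreal"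
  assumes "sigma_finite_measure M"
    and "nonlinear_order_preserving_form M E"
    and "w \<in> borel_measurable M"
  shows "Ktilde M E w \<le> hardy_const M E w \<and> hardy_const M E w \<le> 2 * Ktilde M E w"
  using Ktilde_le_hardy_const[OF assms] hardy_const_le_two_Ktilde[OF assms] by simp

end
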